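(* Let $\lambda>0$, $c>0$, $0<p<1$, and let $\big(X(t),Y(t)\big)$ be the planar orthogonal random motion described in the context. Then for all real $\alpha,\beta$ and $t>0$, \begin{align*}\mathbb{E}\left[e^{i\alpha X(t)+i\beta Y(t)}\right]=\frac{e^{-\lambda t}}{4}\Bigg\{&\left(1+\frac{\lambda p}{A(\alpha,\beta)}\right)e^{A(\alpha,\beta)t}+\left(1-\frac{\lambda p}{A(\alpha,\beta)}\right)e^{-A(\alpha,\beta)t}\Bigg\}\\ &\cdot\Bigg\{\left(1+\frac{\lambda (1-p)}{B(\alpha,\beta)}\right)e^{B(\alpha,\beta)t}+\left(1-\frac{\lambda (1-p)}{B(\alpha,\beta)}\right)e^{-B(\alpha,\beta)t}\Bigg\},\end{align*} where $A(\alpha,\beta)=\frac{1}{2}\sqrt{4\lambda^2p^2-c^2(\alpha-\beta)^2}$ and $B(\alpha,\beta)=\frac{1}{2}\sqrt{4\lambda^2(1-p)^2-c^2(\alpha+\beta)^2}$.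
   Context: Directions: $d_j=\big(\cos(\pi j/2),\sin(\pi j/2)\big)$, $j=0,1,2,3$, indices taken mod 4. Let $N(t)$ be a homogeneous Poisson process of rate $\lambda>0$. The direction process $D(t)$ takes values in $\{d_0,d_1,d_2,d_3\}$, $D(0)$ is uniformly distributed on the four directions, and $D$ changes only at the Poisson event times as follows: if the current direction is horizontal ($d_0$ or $d_2$), it turns counterclockwise ($d_j\to d_{j+1}$) with probability $p$ and clockwise ($d_j\to d_{j-1}$) with probability $1-p$; if the current direction is vertical ($d_1$ or $d_3$), it turns counterclockwise with probability $1-p$ and clockwise with probability $p$ (choices independent of everything else). Equivalently $D$ is a continuous-time Markov chain with generator $G=\begin{pmatrix}-\lambda & \lambda p & 0 & \lambda(1-p)\\ \lambda p & -\lambda & \lambda(1-p) & 0\\ 0 & \lambda(1-p) & -\lambda & \lambda p\\ \lambda(1-p) & 0 & \lambda p & -\lambda\end{pmatrix}$ on states $(d_0,d_1,d_2,d_3)$. The position is $\big(X(t),Y(t)\big)=c\int_0^t D(\tau)\,d\tau$, starting at the origin, with constant speed $c>0$. Square roots are principal branches; the expressions are understood by continuity where $A$ or $B$ vanishes. *)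

theory Defs
  imports "HOL-Probability.Probability"
begin

text \<open>Sources of randomness: initial direction, i.i.d. exponential
inter-arrival times of the Poisson process, i.i.d. turn choices.\<close>
datatype src = Dir0 | Wait nat | Turn nat

text \<open>All sources combined into one real-valued family (for stating joint independence).\<close>
definition src_rv :: "('a \<Rightarrow> nat) \<Rightarrow> (nat \<Rightarrow> 'a \<Rightarrow> real) \<Rightarrow> (nat \<Rightarrow> 'a \<Rightarrow> bool) \<Rightarrow> src \<Rightarrow> 'a \<Rightarrow> real" where
  "src_rv D0 \<tau> \<xi> i \<omega> = (case i of Dir0 \<Rightarrow> real (D0 \<omega>) | Wait k \<Rightarrow> \<tau> k \<omega> | Turn k \<Rightarrow> of_bool (\<xi> k \<omega>))"

definition jump_time :: "(nat \<Rightarrow> 'a \<Rightarrow> real) \<Rightarrow> nat \<Rightarrow> 'a \<Rightarrow> real" where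
  "jump_time \<tau> n \<omega> = (\<Sum>k<n. \<tau> k \<omega>)"

definition poisson_count :: "(nat \<Rightarrow> 'a \<Rightarrow> real) \<Rightarrow> real \<Rightarrow> 'a \<Rightarrow> nat" where
  "poisson_count \<tau> t \<omega> = card {n::nat. 1 \<le> n \<and> jump_time \<tau> n \<omega> \<le> t}"

text \<open>Direction index (j for d_j) after n turns. At the (n+1)-th event, the choice \<xi> n is used:
 \<xi> n = True (probability p) means counterclockwise if horizontal, clockwise if vertical.\<close>
fun dir_seq :: "('a \<Rightarrow> nat) \<Rightarrow> (nat \<Rightarrow> 'a \<Rightarrow> bool) \<Rightarrow> nat \<Rightarrow> 'a \<Rightarrow> nat" where
  "dir_seq D0 \<xi> 0 \<omega> = D0 \<omega> mod 4"
| "dir_seq D0 \<xi> (Suc n) \<omega> =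
     (let j = dir_seq D0 \<xi> n \<omega> in
      if even j then (if \<xi> n \<omega> then (j + 1) mod 4 else (j + 3) mod 4)
      else (if \<xi> n \<omega> then (j + 3) mod 4 else (j + 1) mod 4))"

definition dir_index :: "('a \<Rightarrow> nat) \<Rightarrow> (nat \<Rightarrow> 'a \<Rightarrow> real) \<Rightarrow> (nat \<Rightarrow> 'a \<Rightarrow> bool) \<Rightarrow> real \<Rightarrow> 'a \<Rightarrow> nat" where
  "dir_index D0 \<tau> \<xi> t \<omega> = dir_seq D0 \<xi> (poisson_count \<tau> t \<omega>) \<omega>"

definition dir_vec :: "nat \<Rightarrow> real \<times> real" where
  "dir_vec j = (cos (pi * real j / 2), sin (pi * real j / 2))"

definition posX :: "real \<Rightarrow> ('a \<Rightarrow> nat) \<Rightarrow> (nat \<Rightarrow> 'a \<Rightarrow> real) \<Rightarrow> (nat \<Rightarrow> 'a \<Rightarrow> bool) \<Rightarrow> real \<Rightarrow> 'a \<Rightarrow> real" where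
  "posX c D0 \<tau> \<xi> t \<omega> = c * integral {0..t} (\<lambda>s. fst (dir_vec (dir_index D0 \<tau> \<xi> s \<omega>)))"

definition posY :: "real \<Rightarrow> ('a \<Rightarrow> nat) \<Rightarrow> (nat \<Rightarrow> 'a \<Rightarrow> real) \<Rightarrow> (nat \<Rightarrow> 'a \<Rightarrow> bool) \<Rightarrow> real \<Rightarrow> 'a \<Rightarrow> real" where
  "posY c D0 \<tau> \<xi> t \<omega> = c * integral {0..t} (\<lambda>s. snd (dir_vec (dir_index D0 \<tau> \<xi> s \<omega>)))"

text \<open>(1 + k/a) e^{a t} + (1 - k/a) e^{-a t}, extended by continuity at a = 0 (value 2 + 2 k t).\<close>
definition phi :: "complex \<Rightarrow> real \<Rightarrow> real \<Rightarrow> complex" where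
  "phi a k t = (if a = 0 then 2 + 2 * of_real k * of_real t
               else (1 + of_real k / a) * exp (a * of_real t) + (1 - of_real k / a) * exp (- a * of_real t))"

definition Afun :: "real \<Rightarrow> real \<Rightarrow> real \<Rightarrow> real \<Rightarrow> real \<Rightarrow> complex" where
  "Afun lam p c \<alpha> \<beta> = csqrt (of_real (4 * lam^2 * p^2 - c^2 * (\<alpha> - \<beta>)^2)) / 2"

definition Bfun :: "real \<Rightarrow> real \<Rightarrow> real \<Rightarrow> real \<Rightarrow> real \<Rightarrow> complex" where
  "Bfun lam p c \<alpha> \<beta> = csqrt (of_real (4 * lam^2 * (1 - p)^2 - c^2 * (\<alpha> + \<beta>)^2)) / 2"

end

theory Submission
  imports Defs
begin

text \<open>Split the characteristic function according to the number \<open>n\<close> of Poisson events in \<open>[0, t]\<close>: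
  on the event \<open>N(t) = n\<close> the phase \<open>\<alpha> X(t) + \<beta> Y(t)\<close> is a linear function of the flight times.
  Conditioning on the first flight and the first turn, the expected contributions \<open>f\<^sub>n\<close> satisfy a
  renewal recursion, and their sum is the unique bounded solution of the associated renewal equation.
  Encode \<open>d\<^sub>j\<close> by its two signs along the diagonals \<open>(1, -1)\<close> and \<open>(1, 1)\<close>: a turn flips exactly
  one of them, the first with probability \<open>p\<close>, the second with probability \<open>1 - p\<close>. Hence the
  candidate solution is the product of the characteristic functions of two independent telegraph
  processes, which satisfies the renewal equation by variation of constants. Averaging over the
  uniform initial direction gives the formula. At \<open>\<alpha> = \<beta> = 0\<close> it equals \<open>1\<close>, which also shows
  that almost surely only finitely many events occur before \<open>t\<close>, so that dominated convergence
  justifies summing over \<open>n\<close>.\<close>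

section \<open>Paths with finitely many events\<close>

definition proj_dir :: "real \<Rightarrow> real \<Rightarrow> nat \<Rightarrow> real" where
  "proj_dir a b j = a * cos (pi * real j / 2) + b * sin (pi * real j / 2)"

definition turn :: "nat \<Rightarrow> bool \<Rightarrow> nat" where
  "turn j b = (if even j then (if b then (j + 1) mod 4 else (j + 3) mod 4)
              else (if b then (j + 3) mod 4 else (j + 1) mod 4))"

fun dirs :: "nat \<Rightarrow> (nat \<Rightarrow> bool) \<Rightarrow> nat \<Rightarrow> nat" where
  "dirs j x 0 = j"
| "dirs j x (Suc k) = turn (dirs j x k) (x k)"

lemma turn_less_4: "turn j b < 4"
  by (simp add: turn_def)

lemma dir_seq_eq_dirs: "dir_seq D0 \<xi> n \<omega> = dirs (D0 \<omega> mod 4) (\<lambda>k. \<xi> k \<omega>) n"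
  by (induction n) (simp_all add: turn_def Let_def)

lemma dirs_Suc_shift: "dirs j x (Suc k) = dirs (turn j (x 0)) (\<lambda>i. x (Suc i)) k"
  by (induction k) simp_all

definition n_jumps :: "nat \<Rightarrow> real \<Rightarrow> (nat \<Rightarrow> real) \<Rightarrow> bool" where
  "n_jumps n t \<tau> \<longleftrightarrow> (\<forall>k<n. 0 \<le> \<tau> k) \<and> (\<Sum>k<n. \<tau> k) \<le> t \<and> t < (\<Sum>k<Suc n. \<tau> k)"

lemma n_jumps_0: "n_jumps 0 t \<tau> \<longleftrightarrow> 0 \<le> t \<and> t < \<tau> 0"
  by (simp add: n_jumps_def)

lemma n_jumps_Suc:
  "n_jumps (Suc n) t \<tau> \<longleftrightarrow> 0 \<le> \<tau> 0 \<and> \<tau> 0 \<le> t \<and> n_jumps n (t - \<tau> 0) (\<lambda>k. \<tau> (Suc k))"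
proof -
  have sum_Suc: "(\<Sum>k<Suc m. \<tau> k) = \<tau> 0 + (\<Sum>k<m. \<tau> (Suc k))" for m
    by (rule sum.lessThan_Suc_shift)
  have "(\<forall>k<Suc n. 0 \<le> \<tau> k) \<longleftrightarrow> 0 \<le> \<tau> 0 \<and> (\<forall>k<n. 0 \<le> \<tau> (Suc k))"
    using less_Suc_eq_0_disj by auto
  moreover have "(\<forall>k<n. 0 \<le> \<tau> (Suc k)) \<Longrightarrow> 0 \<le> (\<Sum>k<n. \<tau> (Suc k))"
    by (rule sum_nonneg) auto
  ultimately show ?thesis
    unfolding n_jumps_def sum_Suc by auto
qed

lemma n_jumps_unique:
  assumes "n_jumps n t \<tau>" "n_jumps m t \<tau>"
  shows "n = m"
proof -
  have False if "n_jumps n t \<tau>" "n_jumps m t \<tau>" "n < m" for n m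
  proof -
    have "(\<Sum>k<Suc n. \<tau> k) \<le> (\<Sum>k<m. \<tau> k)"
      using that by (intro sum_mono2) (auto simp: n_jumps_def)
    then show False
      using that unfolding n_jumps_def by linarith
  qed
  then show ?thesis
    using assms by (metis linorder_neqE_nat)
qed

definition phase :: "real \<Rightarrow> real \<Rightarrow> real \<Rightarrow> nat \<Rightarrow> nat \<Rightarrow> real \<Rightarrow> (nat \<Rightarrow> real) \<Rightarrow> (nat \<Rightarrow> bool) \<Rightarrow> real" where
  "phase c a b n j t \<tau> x =
     c * ((\<Sum>k<n. \<tau> k * proj_dir a b (dirs j x k)) + (t - (\<Sum>k<n. \<tau> k)) * proj_dir a b (dirs j x n))"

lemma phase_Suc:
  "phase c a b (Suc n) j t \<tau> x =
     c * \<tau> 0 * proj_dir a b j + phase c a b n (turn j (x 0)) (t - \<tau> 0) (\<lambda>k. \<tau> (Suc k)) (\<lambda>k. x (Suc k))"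
proof -
  have "(\<Sum>k<Suc n. \<tau> k) = \<tau> 0 + (\<Sum>k<n. \<tau> (Suc k))"
    by (rule sum.lessThan_Suc_shift)
  moreover have "(\<Sum>k<Suc n. \<tau> k * proj_dir a b (dirs j x k)) =
      \<tau> 0 * proj_dir a b j + (\<Sum>k<n. \<tau> (Suc k) * proj_dir a b (dirs (turn j (x 0)) (\<lambda>i. x (Suc i)) k))"
    by (subst sum.lessThan_Suc_shift) (simp only: dirs_Suc_shift dirs.simps(1))
  ultimately show ?thesis
    unfolding phase_def dirs_Suc_shift by (simp add: algebra_simps)
qed

text \<open>The recursion peels off the first flight, as the renewal argument does; the closed form is
  \<open>phasor_eq\<close>.\<close>
fun phasor :: "real \<Rightarrow> real \<Rightarrow> real \<Rightarrow> nat \<Rightarrow> nat \<Rightarrow> real \<Rightarrow> (nat \<Rightarrow> real) \<Rightarrow> (nat \<Rightarrow> bool) \<Rightarrow> complex" where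
  "phasor c a b 0 j t \<tau> x = (if 0 \<le> t \<and> t < \<tau> 0 then cis (c * t * proj_dir a b j) else 0)"
| "phasor c a b (Suc n) j t \<tau> x =
     (if 0 \<le> \<tau> 0 \<and> \<tau> 0 \<le> t then
        cis (c * \<tau> 0 * proj_dir a b j) *
        phasor c a b n (turn j (x 0)) (t - \<tau> 0) (\<lambda>k. \<tau> (Suc k)) (\<lambda>k. x (Suc k))
      else 0)"

lemma phasor_eq: "phasor c a b n j t \<tau> x = (if n_jumps n t \<tau> then cis (phase c a b n j t \<tau> x) else 0)"
proof (induction n arbitrary: j t \<tau> x)
  case 0
  show ?case by (simp add: n_jumps_0 phase_def mult.assoc)
next
  case (Suc n)
  show ?case by (simp add: Suc.IH n_jumps_Suc phase_Suc cis_mult)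
qed

lemma norm_phasor_le: "norm (phasor c a b n j t \<tau> x) \<le> 1"
  by (simp add: phasor_eq)

lemma sum_phasor:
  assumes "n_jumps n0 t \<tau>"
  shows "(\<Sum>n<N. phasor c a b n j t \<tau> x) = (if n0 < N then phasor c a b n0 j t \<tau> x else 0)"
proof -
  have "(\<Sum>n<N. phasor c a b n j t \<tau> x) = (\<Sum>n<N. if n0 = n then phasor c a b n0 j t \<tau> x else 0)"
    by (intro sum.cong refl) (use assms n_jumps_unique in \<open>auto simp: phasor_eq\<close>)
  then show ?thesis by (simp add: sum.delta)
qed

lemma norm_sum_phasor_le: "norm (\<Sum>n<N. phasor c a b n j t \<tau> x) \<le> 1"
proof (cases "\<exists>n. n_jumps n t \<tau>")
  case True
  then obtain n0 where "n_jumps n0 t \<tau>" by blast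
  then show ?thesis by (simp add: sum_phasor norm_phasor_le)
qed (simp add: phasor_eq)

lemma has_integral_step_function:
  fixes T :: "nat \<Rightarrow> real" and h :: "real \<Rightarrow> real" and v :: "nat \<Rightarrow> real"
  assumes T0: "T 0 = 0" and T_mono: "\<And>k. T k \<le> T (Suc k)"
    and h_step: "\<And>k s. k \<le> n \<Longrightarrow> T k \<le> s \<Longrightarrow> s < T (Suc k) \<Longrightarrow> h s = v k"
    and t: "T n \<le> t" "t < T (Suc n)"
  shows "(h has_integral ((\<Sum>k<n. (T (Suc k) - T k) * v k) + (t - T n) * v n)) {0..t}"
proof -
  have T_nonneg: "0 \<le> T m" for m
    using lift_Suc_mono_le[of T, OF T_mono, of 0 m] T0 by simp
  have initial: "(h has_integral (\<Sum>k<m. (T (Suc k) - T k) * v k)) {0..T m}" if "m \<le> n" for m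
    using that
  proof (induction m)
    case 0
    then show ?case using T0 by (simp add: has_integral_refl(2))
  next
    case (Suc m)
    have "(h has_integral ((T (Suc m) - T m) * v m)) {T m..T (Suc m)}"
    proof (rule has_integral_spike_finite[of "{T (Suc m)}"])
      show "h x = v m" if "x \<in> {T m..T (Suc m)} - {T (Suc m)}" for x
        using that Suc.prems by (intro h_step) auto
      show "((\<lambda>x. v m) has_integral (T (Suc m) - T m) * v m) {T m..T (Suc m)}"
        using has_integral_const_real[of "v m" "T m" "T (Suc m)"] T_mono[of m] by simp
    qed simp
    from has_integral_combine[OF T_nonneg T_mono Suc.IH[OF Suc_leD[OF Suc.prems]] this]
    show ?case by (simp add: add.commute)
  qed
  have "((\<lambda>x. v n) has_integral (t - T n) * v n) {T n..t}"
    using has_integral_const_real[of "v n" "T n" t] t by simp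
  then have "(h has_integral ((t - T n) * v n)) {T n..t}"
    by (rule has_integral_eq[rotated]) (use h_step[of n] t in force)
  from has_integral_combine[OF T_nonneg t(1) initial[OF order_refl] this] show ?thesis .
qed

lemma poisson_count_eq:
  assumes pos: "\<And>k. 0 < \<tau> k \<omega>" and s: "jump_time \<tau> k \<omega> \<le> s" "s < jump_time \<tau> (Suc k) \<omega>"
  shows "poisson_count \<tau> s \<omega> = k"
proof -
  have mono: "strict_mono (\<lambda>k. jump_time \<tau> k \<omega>)"
    by (rule strict_monoI_Suc) (simp add: jump_time_def pos)
  have "{n. 1 \<le> n \<and> jump_time \<tau> n \<omega> \<le> s} = {1..k}"
  proof safe
    fix m assume "1 \<le> m" "jump_time \<tau> m \<omega> \<le> s"
    moreover have "m \<le> k"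
    proof (rule ccontr)
      assume "\<not> m \<le> k"
      then have "jump_time \<tau> (Suc k) \<omega> \<le> jump_time \<tau> m \<omega>"
        using strict_mono_less_eq[OF mono, of "Suc k" m] by simp
      then show False using s \<open>jump_time \<tau> m \<omega> \<le> s\<close> by linarith
    qed
    ultimately show "m \<in> {1..k}" by simp
  next
    fix m assume "m \<in> {1..k}"
    then show "1 \<le> m" "jump_time \<tau> m \<omega> \<le> s"
      using s mono by (auto intro: order_trans[OF strict_mono_leD[OF mono]])
  qed
  then show ?thesis
    by (simp add: poisson_count_def)
qed

text \<open>Between two events the direction is constant, so the time integrals defining the
  position are integrals of step functions.\<close>
lemma position_eq_phase:
  assumes pos: "\<And>k. 0 < \<tau> k \<omega>" and jumps: "n_jumps n t (\<lambda>k. \<tau> k \<omega>)"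
  shows "a * posX c D0 \<tau> \<xi> t \<omega> + b * posY c D0 \<tau> \<xi> t \<omega>
       = phase c a b n (D0 \<omega> mod 4) t (\<lambda>k. \<tau> k \<omega>) (\<lambda>k. \<xi> k \<omega>)"
proof -
  define T where "T k = jump_time \<tau> k \<omega>" for k
  define j where "j = D0 \<omega> mod 4"
  define x where "x = (\<lambda>k. \<xi> k \<omega>)"
  have T0: "T 0 = 0" by (simp add: T_def jump_time_def)
  have T_Suc: "T (Suc k) - T k = \<tau> k \<omega>" for k by (simp add: T_def jump_time_def)
  have T_mono: "T k \<le> T (Suc k)" for k using pos[of k] T_Suc[of k] by simp
  have t: "T n \<le> t" "t < T (Suc n)" using jumps by (auto simp: n_jumps_def T_def jump_time_def)
  have dir: "dir_index D0 \<tau> \<xi> s \<omega> = dirs j x k" if "T k \<le> s" "s < T (Suc k)" for k s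
    using poisson_count_eq[OF pos that[unfolded T_def]]
    by (simp add: dir_index_def dir_seq_eq_dirs j_def x_def)
  have X: "((\<lambda>s. fst (dir_vec (dir_index D0 \<tau> \<xi> s \<omega>))) has_integral
      ((\<Sum>k<n. (T (Suc k) - T k) * cos (pi * real (dirs j x k) / 2)) + (t - T n) * cos (pi * real (dirs j x n) / 2))) {0..t}"
    by (rule has_integral_step_function[OF T0 T_mono _ t]) (simp add: dir dir_vec_def)
  have Y: "((\<lambda>s. snd (dir_vec (dir_index D0 \<tau> \<xi> s \<omega>))) has_integral
      ((\<Sum>k<n. (T (Suc k) - T k) * sin (pi * real (dirs j x k) / 2)) + (t - T n) * sin (pi * real (dirs j x n) / 2))) {0..t}"
    by (rule has_integral_step_function[OF T0 T_mono _ t]) (simp add: dir dir_vec_def)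
  have Tn: "T n = (\<Sum>k<n. \<tau> k \<omega>)" by (simp add: T_def jump_time_def)
  show ?thesis
    unfolding posX_def posY_def integral_unique[OF X] integral_unique[OF Y] phase_def T_Suc Tn
    by (simp add: proj_dir_def algebra_simps sum_distrib_left sum.distrib j_def x_def)
qed

section \<open>Measurability\<close>

text \<open>The right-hand side involves only countable quantifiers and finite sums, so it is
  measurable as soon as every \<open>P n\<close> is.\<close>
lemma card_Collect_nat_eq_iff:
  fixes P :: "nat \<Rightarrow> bool"
  shows "card {n. P n} = m \<longleftrightarrow>
    (\<exists>K. (\<forall>n\<ge>K. \<not> P n) \<and> (\<Sum>n<K. (if P n then 1 else 0::real)) = real m) \<or> ((\<forall>K. \<exists>n\<ge>K. P n) \<and> m = 0)"
proof -
  have sum_eq_card: "(\<Sum>n<K. (if P n then 1 else 0::real)) = real (card {n. n < K \<and> P n})" for K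
    by (simp add: sum.If_cases Int_def conj_commute)
  show ?thesis
  proof (cases "finite {n. P n}")
    case True
    then obtain K where K: "\<forall>n\<ge>K. \<not> P n"
      by (metis finite_nat_set_iff_bounded mem_Collect_eq not_less)
    have "{n. n < K' \<and> P n} = {n. P n}" if "\<forall>n\<ge>K'. \<not> P n" for K'
      using that by (auto simp: not_le[symmetric])
    then show ?thesis
      unfolding sum_eq_card using K by (metis of_nat_eq_iff)
  next
    case False
    have "\<forall>K. \<exists>n\<ge>K. P n"
      using False by (metis finite_nat_set_iff_bounded mem_Collect_eq not_less)
    then show ?thesis
      using False by auto
  qed
qed

lemma measurable_card_le:
  fixes S :: "nat \<Rightarrow> 'a \<Rightarrow> real" and u :: "'a \<Rightarrow> real"
  assumes [measurable]: "\<And>n. S n \<in> borel_measurable N" "u \<in> borel_measurable N"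
  shows "(\<lambda>x. card {n::nat. 1 \<le> n \<and> S n x \<le> u x}) \<in> measurable N (count_space UNIV)"
proof (subst measurable_count_space_eq2_countable, safe)
  fix m :: nat
  have "(\<lambda>x. card {n::nat. 1 \<le> n \<and> S n x \<le> u x}) -` {m} \<inter> space N =
    {x \<in> space N. (\<exists>K. (\<forall>n\<ge>K. \<not> (1 \<le> n \<and> S n x \<le> u x)) \<and>
                        (\<Sum>n<K. (if 1 \<le> n \<and> S n x \<le> u x then 1 else 0::real)) = real m)
        \<or> ((\<forall>K. \<exists>n\<ge>K. 1 \<le> n \<and> S n x \<le> u x) \<and> m = 0)}"
    by (subst card_Collect_nat_eq_iff[symmetric]) auto
  also have "\<dots> \<in> sets N"
    by measurable
  finally show "(\<lambda>x. card {n::nat. 1 \<le> n \<and> S n x \<le> u x}) -` {m} \<inter> space N \<in> sets N" .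
qed simp

lemma dir_seq_measurable[measurable]:
  assumes [measurable]: "D0 \<in> measurable M (count_space UNIV)" "\<And>k. \<xi> k \<in> measurable M (count_space UNIV)"
  shows "(\<lambda>\<omega>. dir_seq D0 \<xi> n \<omega>) \<in> measurable M (count_space UNIV)"
  by (induction n) (simp_all add: Let_def)

text \<open>The time integral is taken in the Henstock-Kurzweil sense; measurability in \<open>\<omega>\<close>
  follows by identifying it with a Lebesgue integral over the product space.\<close>
lemma measurable_integral_dir_index:
  fixes F :: "real \<Rightarrow> real"
  assumes [measurable]: "D0 \<in> measurable M (count_space UNIV)"
    "\<And>k. \<tau> k \<in> borel_measurable M" "\<And>k. \<xi> k \<in> measurable M (count_space UNIV)"
    and F_bounded: "\<And>x. \<bar>F x\<bar> \<le> 1"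
  shows "(\<lambda>\<omega>. integral {0..t} (\<lambda>s. F (real (dir_index D0 \<tau> \<xi> s \<omega>)))) \<in> borel_measurable M"
proof -
  have [measurable]: "F \<in> borel_measurable (count_space UNIV)" by simp
  define g where "g \<omega> s = F (real (dir_seq D0 \<xi> (poisson_count \<tau> s \<omega>) \<omega>))" for \<omega> s
  have [measurable]: "(\<lambda>z. poisson_count \<tau> (snd z) (fst z)) \<in> measurable (M \<Otimes>\<^sub>M lborel) (count_space UNIV)"
    unfolding poisson_count_def by (rule measurable_card_le) (simp_all add: jump_time_def)
  have g_measurable: "(\<lambda>z. g (fst z) (snd z)) \<in> borel_measurable (M \<Otimes>\<^sub>M lborel)"
    unfolding g_def
    by (rule measurable_compose_countable[where f="\<lambda>i z. F (real (dir_seq D0 \<xi> i (fst z)))"]) measurable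
  have g_integrable: "set_integrable lborel {0..t} (g \<omega>)" if "\<omega> \<in> space M" for \<omega>
  proof -
    have "integrable lborel (indicator {0..t} :: real \<Rightarrow> real)"
      by (simp add: integrable_indicator_iff emeasure_lborel_Icc_eq)
    moreover have "(\<lambda>x. indicator {0..t} x *\<^sub>R g \<omega> x) \<in> borel_measurable lborel"
      using measurable_Pair2[OF g_measurable that] by simp
    moreover have "AE x in lborel. norm (indicator {0..t} x *\<^sub>R g \<omega> x) \<le> norm (indicator {0..t} x :: real)"
      by (auto simp: g_def indicator_def F_bounded)
    ultimately show ?thesis
      unfolding set_integrable_def by (rule Bochner_Integration.integrable_bound)
  qed
  have integral_eq: "integral {0..t} (\<lambda>s. F (real (dir_index D0 \<tau> \<xi> s \<omega>))) = (\<integral>s. indicator {0..t} s *\<^sub>R g \<omega> s \<partial>lborel)"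
    if "\<omega> \<in> space M" for \<omega>
    using set_borel_integral_eq_integral(2)[OF g_integrable[OF that]]
    by (simp add: set_lebesgue_integral_def g_def[abs_def] dir_index_def)
  have "(\<lambda>\<omega>. \<integral>s. indicator {0..t} s *\<^sub>R g \<omega> s \<partial>lborel) \<in> borel_measurable M"
    using g_measurable by (intro lborel.borel_measurable_lebesgue_integral) (simp add: case_prod_beta')
  then show ?thesis
    by (rule measurable_cong[THEN iffD1, rotated]) (simp add: integral_eq)
qed

lemma measurable_cis_position:
  assumes [measurable]: "D0 \<in> measurable M (count_space UNIV)"
    "\<And>k. \<tau> k \<in> borel_measurable M" "\<And>k. \<xi> k \<in> measurable M (count_space UNIV)"
  shows "(\<lambda>\<omega>. cis (a * posX c D0 \<tau> \<xi> t \<omega> + b * posY c D0 \<tau> \<xi> t \<omega>)) \<in> borel_measurable M"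
proof -
  have [measurable]: "(\<lambda>\<omega>. posX c D0 \<tau> \<xi> t \<omega>) \<in> borel_measurable M"
    unfolding posX_def dir_vec_def fst_conv
    using measurable_integral_dir_index[OF assms, of "\<lambda>x. cos (pi * x / 2)" t] by simp
  have [measurable]: "(\<lambda>\<omega>. posY c D0 \<tau> \<xi> t \<omega>) \<in> borel_measurable M"
    unfolding posY_def dir_vec_def snd_conv
    using measurable_integral_dir_index[OF assms, of "\<lambda>x. sin (pi * x / 2)" t] by simp
  show ?thesis
    unfolding cis_conv_exp by measurable
qed

lemma phasor_measurable:
  fixes T :: "'b \<Rightarrow> real" and \<tau> :: "nat \<Rightarrow> 'b \<Rightarrow> real" and x :: "nat \<Rightarrow> 'b \<Rightarrow> bool"
  assumes "T \<in> borel_measurable N" "\<And>k. \<tau> k \<in> borel_measurable N"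
    "\<And>k. x k \<in> measurable N (count_space UNIV)"
  shows "(\<lambda>z. phasor c a b n j (T z) (\<lambda>k. \<tau> k z) (\<lambda>k. x k z)) \<in> borel_measurable N"
  using assms
proof (induction n arbitrary: j T \<tau> x)
  case 0
  note [measurable] = "0.prems"
  show ?case
    unfolding phasor.simps cis_conv_exp by measurable
next
  case (Suc n)
  note [measurable] = Suc.prems
  have [measurable]: "(\<lambda>z. phasor c a b n (turn j u) (T z - \<tau> 0 z) (\<lambda>k. \<tau> (Suc k) z) (\<lambda>k. x (Suc k) z))
      \<in> borel_measurable N" for u
    by (rule Suc.IH) simp_all
  have unfold_first_turn: "phasor c a b (Suc n) j (T z) (\<lambda>k. \<tau> k z) (\<lambda>k. x k z) =
    (if 0 \<le> \<tau> 0 z \<and> \<tau> 0 z \<le> T z then cis (c * \<tau> 0 z * proj_dir a b j) *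
      (if x 0 z then phasor c a b n (turn j True) (T z - \<tau> 0 z) (\<lambda>k. \<tau> (Suc k) z) (\<lambda>k. x (Suc k) z)
       else phasor c a b n (turn j False) (T z - \<tau> 0 z) (\<lambda>k. \<tau> (Suc k) z) (\<lambda>k. x (Suc k) z)) else 0)" for z
    by (cases "x 0 z") simp_all
  show ?case
    unfolding unfold_first_turn cis_conv_exp by measurable
qed

section \<open>The renewal equation\<close>

text \<open>Conditioning on the first flight: it lasts \<open>s\<close> with density \<open>lam * exp (- lam * s)\<close> and
  contributes the phase \<open>k s\<close>, after which the walk restarts with the remaining time \<open>t - s\<close>.\<close>
definition renewal_integral :: "real \<Rightarrow> real \<Rightarrow> (real \<Rightarrow> complex) \<Rightarrow> real \<Rightarrow> complex" where
  "renewal_integral lam k u t =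
     (\<integral>s. of_real (exponential_density lam s) * (if 0 \<le> s \<and> s \<le> t then cis (k * s) * u (t - s) else 0) \<partial>lborel)"

lemma exponential_density_le: "0 < lam \<Longrightarrow> 0 \<le> s \<Longrightarrow> exponential_density lam s \<le> lam"
  by (simp add: exponential_density_def)

lemma renewal_integrand_integrable:
  assumes lam: "0 < lam" and u_measurable: "(\<lambda>s. u (t - s)) \<in> borel_measurable borel"
    and u_bounded: "\<And>x. 0 \<le> x \<Longrightarrow> x \<le> t \<Longrightarrow> norm (u x) \<le> B"
  shows "integrable lborel
    (\<lambda>s. of_real (exponential_density lam s) * (if 0 \<le> s \<and> s \<le> t then cis (k * s) * u (t - s) else 0))"
proof (rule Bochner_Integration.integrable_bound)
  show "integrable lborel (\<lambda>s. (lam * \<bar>B\<bar>) *\<^sub>R indicator {0..t} s :: real)"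
    by (intro integrable_scaleR_right) (simp add: integrable_indicator_iff emeasure_lborel_Icc_eq)
  have [measurable]: "(\<lambda>s. u (t - s)) \<in> borel_measurable lborel"
    using u_measurable by (simp add: measurable_lborel1)
  have [measurable]: "exponential_density lam \<in> borel_measurable lborel"
    unfolding exponential_density_def[abs_def] by measurable
  show "(\<lambda>s. of_real (exponential_density lam s) * (if 0 \<le> s \<and> s \<le> t then cis (k * s) * u (t - s) else 0))
      \<in> borel_measurable lborel"
    unfolding cis_conv_exp by measurable
  have "norm (of_real (exponential_density lam s) * (if 0 \<le> s \<and> s \<le> t then cis (k * s) * u (t - s) else 0))
        \<le> norm ((lam * \<bar>B\<bar>) *\<^sub>R indicator {0..t} s :: real)" for s
  proof (cases "0 \<le> s \<and> s \<le> t")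
    case True
    have density: "0 \<le> exponential_density lam s" "exponential_density lam s \<le> lam"
      using True lam by (auto simp: exponential_density_nonneg exponential_density_le)
    have "norm (u (t - s)) \<le> \<bar>B\<bar>"
      using u_bounded[of "t - s"] True by auto
    then have "exponential_density lam s * norm (u (t - s)) \<le> lam * \<bar>B\<bar>"
      using density by (intro mult_mono) auto
    then show ?thesis
      using True density lam by (simp add: norm_mult abs_mult)
  qed auto
  then show "AE s in lborel. norm (of_real (exponential_density lam s) *
        (if 0 \<le> s \<and> s \<le> t then cis (k * s) * u (t - s) else 0)) \<le> norm ((lam * \<bar>B\<bar>) *\<^sub>R indicator {0..t} s :: real)"
    by simp
qed

lemma renewal_integral_diff:
  assumes lam: "0 < lam"
    and u: "(\<lambda>s. u (t - s)) \<in> borel_measurable borel" "\<And>x. 0 \<le> x \<Longrightarrow> x \<le> t \<Longrightarrow> norm (u x) \<le> Bu"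
    and w: "(\<lambda>s. w (t - s)) \<in> borel_measurable borel" "\<And>x. 0 \<le> x \<Longrightarrow> x \<le> t \<Longrightarrow> norm (w x) \<le> Bw"
  shows "renewal_integral lam k u t - renewal_integral lam k w t = renewal_integral lam k (\<lambda>x. u x - w x) t"
proof -
  have "renewal_integral lam k u t - renewal_integral lam k w t =
    (\<integral>s. of_real (exponential_density lam s) * (if 0 \<le> s \<and> s \<le> t then cis (k * s) * u (t - s) else 0)
       - of_real (exponential_density lam s) * (if 0 \<le> s \<and> s \<le> t then cis (k * s) * w (t - s) else 0) \<partial>lborel)"
    unfolding renewal_integral_def
    using Bochner_Integration.integral_diff[OF renewal_integrand_integrable[OF lam u] renewal_integrand_integrable[OF lam w]]
    by simp
  also have "\<dots> = renewal_integral lam k (\<lambda>x. u x - w x) t"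
    unfolding renewal_integral_def by (intro Bochner_Integration.integral_cong) (auto simp: algebra_simps)
  finally show ?thesis .
qed

lemma renewal_integral_sum:
  assumes lam: "0 < lam"
    and u_measurable: "\<And>n. (\<lambda>s. u n (t - s)) \<in> borel_measurable borel"
    and u_bounded: "\<And>n x. 0 \<le> x \<Longrightarrow> x \<le> t \<Longrightarrow> norm (u n x) \<le> B"
  shows "renewal_integral lam k (\<lambda>x. \<Sum>n<N. u n x) t = (\<Sum>n<N. renewal_integral lam k (u n) t)"
proof -
  have "renewal_integral lam k (\<lambda>x. \<Sum>n<N. u n x) t =
     (\<integral>s. (\<Sum>n<N. of_real (exponential_density lam s) * (if 0 \<le> s \<and> s \<le> t then cis (k * s) * u n (t - s) else 0)) \<partial>lborel)"
    unfolding renewal_integral_def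
    by (intro Bochner_Integration.integral_cong) (auto simp: sum_distrib_left sum_distrib_right)
  also have "\<dots> = (\<Sum>n<N. renewal_integral lam k (u n) t)"
    unfolding renewal_integral_def
    by (rule Bochner_Integration.integral_sum) (rule renewal_integrand_integrable[OF lam u_measurable u_bounded])
  finally show ?thesis .
qed

lemma has_integral_renewal_integral:
  assumes "0 \<le> t" and u_cont: "continuous_on {0..t} (\<lambda>s. u (t - s))"
  shows "((\<lambda>s. of_real (lam * exp (- lam * s)) * (cis (k * s) * u (t - s))) has_integral renewal_integral lam k u t) {0..t}"
proof -
  have "continuous_on {0..t} (\<lambda>s. of_real (lam * exp (- lam * s)) * (cis (k * s) * u (t - s)))"
    unfolding cis_conv_exp by (intro continuous_intros u_cont)
  note integrable = borel_integrable_atLeastAtMost'[OF this] integrable_continuous_interval[OF this]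
  have "renewal_integral lam k u t =
      (\<integral>s. indicator {0..t} s *\<^sub>R (of_real (lam * exp (- lam * s)) * (cis (k * s) * u (t - s))) \<partial>lborel)"
    unfolding renewal_integral_def
    by (intro Bochner_Integration.integral_cong) (auto simp: exponential_density_def indicator_def mult_ac)
  also have "\<dots> = integral {0..t} (\<lambda>s. of_real (lam * exp (- lam * s)) * (cis (k * s) * u (t - s)))"
    using set_borel_integral_eq_integral(2)[OF integrable(1)] by (simp add: set_lebesgue_integral_def)
  finally show ?thesis
    using integrable(2) by (simp add: integrable_integral)
qed

lemma lebesgue_integral_power_diff:
  assumes t: "0 \<le> t"
  shows "(\<integral>s. indicator {0..t} s * (t - s) ^ N \<partial>lborel) = t ^ Suc N / real (Suc N)"
proof -
  define F where "F s = (- 1 / real (Suc N)) * (t - s) ^ Suc N" for s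
  have "((\<lambda>s. (t - s) ^ N) has_integral (F t - F 0)) {0..t}"
  proof (rule fundamental_theorem_of_calculus[OF t])
    fix x
    have "(F has_real_derivative ((- 1 / real (Suc N)) * (real (Suc N) * (t - x) ^ N * (0 - 1)))) (at x within {0..t})"
      unfolding F_def[abs_def] by (rule derivative_eq_intros refl)+ simp
    also have "(- 1 / real (Suc N)) * (real (Suc N) * (t - x) ^ N * (0 - 1)) = (t - x) ^ N"
      by simp
    finally show "(F has_vector_derivative (t - x) ^ N) (at x within {0..t})"
      by (simp add: has_real_derivative_iff_has_vector_derivative)
  qed
  then have "integral {0..t} (\<lambda>s. (t - s) ^ N) = t ^ Suc N / real (Suc N)"
    by (simp add: integral_unique F_def)
  moreover have "continuous_on {0..t} (\<lambda>s. (t - s) ^ N)"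
    by (intro continuous_intros)
  note integrable = borel_integrable_atLeastAtMost'[OF this]
  have "(\<integral>s. indicator {0..t} s * (t - s) ^ N \<partial>lborel) = integral {0..t} (\<lambda>s. (t - s) ^ N)"
    using set_borel_integral_eq_integral(2)[OF integrable] by (simp add: set_lebesgue_integral_def)
  ultimately show ?thesis by simp
qed

lemma norm_renewal_integral_le:
  assumes lam: "0 < lam" and t: "0 \<le> t" and C: "0 \<le> C"
    and u_measurable: "(\<lambda>s. u (t - s)) \<in> borel_measurable borel"
    and u_bounded: "\<And>x. 0 \<le> x \<Longrightarrow> x \<le> t \<Longrightarrow> norm (u x) \<le> C * (lam * x) ^ N / fact N"
  shows "norm (renewal_integral lam k u t) \<le> C * (lam * t) ^ Suc N / fact (Suc N)"
proof -
  let ?g = "\<lambda>s. of_real (exponential_density lam s) * (if 0 \<le> s \<and> s \<le> t then cis (k * s) * u (t - s) else 0)"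
  let ?h = "\<lambda>s. indicator {0..t} s * (lam * (C * lam ^ N / fact N)) * (t - s) ^ N :: real"
  have "norm (u x) \<le> C * (lam * t) ^ N / fact N" if "0 \<le> x" "x \<le> t" for x
  proof -
    have "(lam * x) ^ N \<le> (lam * t) ^ N"
      using that lam by (intro power_mono mult_left_mono) auto
    then have "C * (lam * x) ^ N / fact N \<le> C * (lam * t) ^ N / fact N"
      using C by (intro divide_right_mono mult_left_mono) auto
    then show ?thesis using u_bounded[OF that] by linarith
  qed
  note g_integrable = renewal_integrand_integrable[OF lam u_measurable this]
  have "set_integrable lborel {0..t} (\<lambda>s. (lam * (C * lam ^ N / fact N)) * (t - s) ^ N)"
    by (rule borel_integrable_atLeastAtMost') (intro continuous_intros)
  then have h_integrable: "integrable lborel ?h"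
    by (simp add: set_integrable_def mult.assoc)
  have "norm (renewal_integral lam k u t) \<le> (\<integral>s. norm (?g s) \<partial>lborel)"
    unfolding renewal_integral_def by (rule integral_norm_bound)
  also have "\<dots> \<le> (\<integral>s. ?h s \<partial>lborel)"
  proof (rule integral_mono[OF integrable_norm[OF g_integrable] h_integrable])
    fix s
    show "norm (?g s) \<le> ?h s"
    proof (cases "0 \<le> s \<and> s \<le> t")
      case True
      have density: "0 \<le> exponential_density lam s" "exponential_density lam s \<le> lam"
        using True lam by (auto simp: exponential_density_nonneg exponential_density_le)
      have "norm (u (t - s)) \<le> C * (lam * (t - s)) ^ N / fact N"
        using u_bounded[of "t - s"] True by auto
      also have "\<dots> = (C * lam ^ N / fact N) * (t - s) ^ N"
        by (simp add: power_mult_distrib)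
      finally have "exponential_density lam s * norm (u (t - s)) \<le> lam * ((C * lam ^ N / fact N) * (t - s) ^ N)"
        using density by (intro mult_mono) auto
      then show ?thesis
        using True density by (simp add: norm_mult mult.assoc)
    qed auto
  qed
  also have "(\<integral>s. ?h s \<partial>lborel) = (lam * (C * lam ^ N / fact N)) * (\<integral>s. indicator {0..t} s * (t - s) ^ N \<partial>lborel)"
    by (subst integral_mult_right_zero[symmetric]) (simp add: mult_ac)
  also have "\<dots> = C * (lam * t) ^ Suc N / fact (Suc N)"
    unfolding lebesgue_integral_power_diff[OF t] by (simp add: field_simps power_mult_distrib fact_Suc)
  finally show ?thesis .
qed

lemma renewal_remainder_le:
  fixes R :: "nat \<Rightarrow> nat \<Rightarrow> real \<Rightarrow> complex" and k :: "nat \<Rightarrow> real"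
  assumes lam: "0 < lam" and p: "0 \<le> p" "p \<le> 1" and C: "0 \<le> C"
    and R_measurable: "\<And>N j x. j < 4 \<Longrightarrow> (\<lambda>s. R N j (x - s)) \<in> borel_measurable borel"
    and R_0: "\<And>j x. j < 4 \<Longrightarrow> 0 \<le> x \<Longrightarrow> x \<le> t \<Longrightarrow> norm (R 0 j x) \<le> C"
    and R_Suc: "\<And>N j x. j < 4 \<Longrightarrow> 0 \<le> x \<Longrightarrow> x \<le> t \<Longrightarrow>
      R (Suc N) j x = of_real p * renewal_integral lam (k j) (R N (turn j True)) x
                    + of_real (1 - p) * renewal_integral lam (k j) (R N (turn j False)) x"
    and "j < 4" "0 \<le> x" "x \<le> t"
  shows "norm (R N j x) \<le> C * (lam * x) ^ N / fact N"
  using assms(8-)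
proof (induction N arbitrary: j x)
  case 0
  then show ?case using R_0 by simp
next
  case (Suc N)
  let ?K = "\<lambda>b. renewal_integral lam (k j) (R N (turn j b)) x"
  let ?bound = "C * (lam * x) ^ Suc N / fact (Suc N)"
  have K_le: "norm (?K b) \<le> ?bound" for b
    using Suc.IH[OF turn_less_4] Suc.prems
    by (intro norm_renewal_integral_le[OF lam _ C R_measurable[OF turn_less_4]]) auto
  have "norm (R (Suc N) j x) \<le> norm (of_real p * ?K True) + norm (of_real (1 - p) * ?K False)"
    unfolding R_Suc[OF Suc.prems] by (rule norm_triangle_ineq)
  also have "\<dots> = p * norm (?K True) + (1 - p) * norm (?K False)"
    using p by (simp only: norm_mult norm_of_real abs_of_nonneg diff_ge_0_iff_ge)
  also have "\<dots> \<le> p * ?bound + (1 - p) * ?bound"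
    using p by (intro add_mono mult_left_mono K_le) auto
  also have "\<dots> = ?bound"
    by (simp only: distrib_right[symmetric]) simp
  finally show ?case .
qed

lemma renewal_remainder_Suc:
  fixes f :: "nat \<Rightarrow> nat \<Rightarrow> real \<Rightarrow> complex" and G :: "nat \<Rightarrow> real \<Rightarrow> complex" and k :: "nat \<Rightarrow> real"
  assumes lam: "0 < lam"
    and f_0: "\<And>j x. 0 \<le> x \<Longrightarrow> f 0 j x = of_real (exp (- lam * x)) * cis (k j * x)"
    and f_Suc: "\<And>n j x. f (Suc n) j x = of_real p * renewal_integral lam (k j) (f n (turn j True)) x
                                      + of_real (1 - p) * renewal_integral lam (k j) (f n (turn j False)) x"
    and f_measurable: "\<And>n j x. (\<lambda>s. f n j (x - s)) \<in> borel_measurable borel"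
    and f_bounded: "\<And>n j x. norm (f n j x) \<le> 1"
    and G_measurable: "\<And>j x. j < 4 \<Longrightarrow> (\<lambda>s. G j (x - s)) \<in> borel_measurable borel"
    and G_bounded: "\<And>j x. j < 4 \<Longrightarrow> 0 \<le> x \<Longrightarrow> x \<le> t \<Longrightarrow> norm (G j x) \<le> C"
    and G_eq: "\<And>j x. j < 4 \<Longrightarrow> 0 \<le> x \<Longrightarrow>
      G j x = of_real (exp (- lam * x)) * cis (k j * x)
            + of_real p * renewal_integral lam (k j) (G (turn j True)) x
            + of_real (1 - p) * renewal_integral lam (k j) (G (turn j False)) x"
    and j: "j < 4" and x: "0 \<le> x" "x \<le> t"
  shows "G j x - (\<Sum>n<Suc N. f n j x) =
      of_real p * renewal_integral lam (k j) (\<lambda>y. G (turn j True) y - (\<Sum>n<N. f n (turn j True) y)) x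
    + of_real (1 - p) * renewal_integral lam (k j) (\<lambda>y. G (turn j False) y - (\<Sum>n<N. f n (turn j False) y)) x"
proof -
  let ?K = "renewal_integral lam (k j)"
  have sum_f_bounded: "norm (\<Sum>n<N. f n j' y) \<le> real N" for j' y
  proof -
    have "norm (\<Sum>n<N. f n j' y) \<le> (\<Sum>n<N. norm (f n j' y))"
      by (rule norm_sum)
    also have "\<dots> \<le> (\<Sum>n<N. 1)"
      by (intro sum_mono f_bounded)
    finally show ?thesis by simp
  qed
  have K_diff: "?K (\<lambda>y. G (turn j u) y - (\<Sum>n<N. f n (turn j u) y)) x = ?K (G (turn j u)) x - (\<Sum>n<N. ?K (f n (turn j u)) x)"
    for u
  proof -
    have "?K (G (turn j u)) x - ?K (\<lambda>y. \<Sum>n<N. f n (turn j u) y) x = ?K (\<lambda>y. G (turn j u) y - (\<Sum>n<N. f n (turn j u) y)) x"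
      by (rule renewal_integral_diff[where Bu=C, OF lam G_measurable[OF turn_less_4] _ _ sum_f_bounded])
         (use G_bounded[OF turn_less_4] x f_measurable in auto)
    moreover have "?K (\<lambda>y. \<Sum>n<N. f n (turn j u) y) x = (\<Sum>n<N. ?K (f n (turn j u)) x)"
      by (rule renewal_integral_sum[OF lam f_measurable f_bounded])
    ultimately show ?thesis by simp
  qed
  have sum_f_Suc: "(\<Sum>n<N. f (Suc n) j x) = of_real p * (\<Sum>n<N. ?K (f n (turn j True)) x)
                                 + of_real (1 - p) * (\<Sum>n<N. ?K (f n (turn j False)) x)"
    unfolding f_Suc by (simp add: sum.distrib sum_distrib_left)
  have "G j x - (\<Sum>n<Suc N. f n j x) = G j x - f 0 j x - (\<Sum>n<N. f (Suc n) j x)"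
    by (subst sum.lessThan_Suc_shift) (simp add: algebra_simps)
  then show ?thesis
    unfolding K_diff G_eq[OF j x(1)] f_0[OF x(1)] sum_f_Suc by (simp add: algebra_simps)
qed

text \<open>The remainder \<open>G - (f 0 + \<dots> + f (N - 1))\<close> satisfies the homogeneous recursion, so it is
  bounded by a multiple of \<open>(lam t)\<^sup>N / N!\<close>.\<close>
lemma renewal_series_tendsto:
  fixes f :: "nat \<Rightarrow> nat \<Rightarrow> real \<Rightarrow> complex" and G :: "nat \<Rightarrow> real \<Rightarrow> complex" and k :: "nat \<Rightarrow> real"
  assumes lam: "0 < lam" and p: "0 \<le> p" "p \<le> 1"
    and f_0: "\<And>j x. 0 \<le> x \<Longrightarrow> f 0 j x = of_real (exp (- lam * x)) * cis (k j * x)"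
    and f_Suc: "\<And>n j x. f (Suc n) j x = of_real p * renewal_integral lam (k j) (f n (turn j True)) x
                                      + of_real (1 - p) * renewal_integral lam (k j) (f n (turn j False)) x"
    and f_measurable: "\<And>n j x. (\<lambda>s. f n j (x - s)) \<in> borel_measurable borel"
    and f_bounded: "\<And>n j x. norm (f n j x) \<le> 1"
    and G_cont: "\<And>j. j < 4 \<Longrightarrow> continuous_on UNIV (G j)"
    and G_eq: "\<And>j x. j < 4 \<Longrightarrow> 0 \<le> x \<Longrightarrow>
      G j x = of_real (exp (- lam * x)) * cis (k j * x)
            + of_real p * renewal_integral lam (k j) (G (turn j True)) x
            + of_real (1 - p) * renewal_integral lam (k j) (G (turn j False)) x"
    and j: "j < 4" and t: "0 \<le> t"
  shows "(\<lambda>N. \<Sum>n<N. f n j t) \<longlonglongrightarrow> G j t"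
proof -
  define R where "R N j x = G j x - (\<Sum>n<N. f n j x)" for N j x
  have G_measurable: "(\<lambda>s. G j (x - s)) \<in> borel_measurable borel" if "j < 4" for j x
    by (intro borel_measurable_continuous_onI continuous_on_compose2[OF G_cont[OF that]] continuous_intros) auto
  have R_measurable: "(\<lambda>s. R N j (x - s)) \<in> borel_measurable borel" if "j < 4" for N j x
    unfolding R_def using G_measurable[OF that] f_measurable by measurable
  obtain C where C: "\<And>j x. j < 4 \<Longrightarrow> 0 \<le> x \<Longrightarrow> x \<le> t \<Longrightarrow> norm (G j x) \<le> C"
  proof -
    have "compact (G j ` {0..t})" if "j < 4" for j
      using G_cont[OF that] by (intro compact_continuous_image compact_Icc) (rule continuous_on_subset, auto)
    then have "bounded (\<Union>j<4. G j ` {0..t})"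
      by (intro bounded_UN compact_imp_bounded) auto
    then show ?thesis
      using that unfolding bounded_iff by fastforce
  qed
  have R_Suc: "R (Suc N) j x = of_real p * renewal_integral lam (k j) (R N (turn j True)) x
                             + of_real (1 - p) * renewal_integral lam (k j) (R N (turn j False)) x"
    if "j < 4" "0 \<le> x" "x \<le> t" for N j x
    unfolding R_def
    by (rule renewal_remainder_Suc[OF lam f_0 f_Suc f_measurable f_bounded G_measurable C G_eq that])
  have "norm (R 0 j x) \<le> max C 0" if "j < 4" "0 \<le> x" "x \<le> t" for j x
    using C[of j x] that by (simp add: R_def)
  from renewal_remainder_le[OF lam p max.cobounded2 R_measurable this R_Suc j t order_refl]
  have R_le: "norm (R N j t) \<le> max C 0 * ((lam * t) ^ N / fact N)" for N
    by simp
  have "(\<lambda>N. (lam * t) ^ N / fact N) \<longlonglongrightarrow> 0"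
    using summable_exp[of "lam * t"] by (intro summable_LIMSEQ_zero) (simp add: divide_inverse mult.commute)
  then have "(\<lambda>N. max C 0 * ((lam * t) ^ N / fact N)) \<longlonglongrightarrow> 0"
    by (rule tendsto_mult_right_zero)
  then have "(\<lambda>N. R N j t) \<longlonglongrightarrow> 0"
    by (rule Lim_null_comparison[rotated]) (intro always_eventually allI R_le)
  then have "(\<lambda>N. G j t - R N j t) \<longlonglongrightarrow> G j t - 0"
    by (intro tendsto_intros)
  then show ?thesis
    by (simp add: R_def)
qed

section \<open>The closed form\<close>

text \<open>Their derivatives involve \<open>R\<close>
  only through \<open>R\<^sup>2\<close>, so the branch of the square roots in \<^const>\<open>Afun\<close> and \<^const>\<open>Bfun\<close> is irrelevant.\<close>
definition cosh_lin :: "complex \<Rightarrow> complex \<Rightarrow> complex" where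
  "cosh_lin R z = (if R = 0 then 1 else (exp (R * z) + exp (- (R * z))) / 2)"

definition sinh_lin :: "complex \<Rightarrow> complex \<Rightarrow> complex" where
  "sinh_lin R z = (if R = 0 then z else (exp (R * z) - exp (- (R * z))) / (2 * R))"

lemma cosh_lin_has_field_derivative: "(cosh_lin R has_field_derivative (R\<^sup>2 * sinh_lin R z)) (at z)"
proof (cases "R = 0")
  case False
  have "((\<lambda>z. (exp (R * z) + exp (- (R * z))) / 2) has_field_derivative
      (R\<^sup>2 * ((exp (R * z) - exp (- (R * z))) / (2 * R)))) (at z)"
    by (rule derivative_eq_intros refl | simp)+ (use False in \<open>simp add: field_simps power2_eq_square\<close>)
  then show ?thesis
    using False unfolding cosh_lin_def sinh_lin_def by simp
next
  case True
  then show ?thesis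
    unfolding cosh_lin_def sinh_lin_def by (auto intro!: derivative_eq_intros)
qed

lemma sinh_lin_has_field_derivative: "(sinh_lin R has_field_derivative (cosh_lin R z)) (at z)"
proof (cases "R = 0")
  case False
  have "((\<lambda>z. (exp (R * z) - exp (- (R * z))) / (2 * R)) has_field_derivative
      ((exp (R * z) + exp (- (R * z))) / 2)) (at z)"
    by (rule derivative_eq_intros refl | simp)+ (use False in \<open>auto simp: divide_simps algebra_simps\<close>)
  then show ?thesis
    using False unfolding cosh_lin_def sinh_lin_def by simp
next
  case True
  then show ?thesis
    unfolding cosh_lin_def sinh_lin_def by (auto intro!: derivative_eq_intros)
qed

text \<open>The characteristic function of a one-dimensional telegraph process with switching rate
  \<open>\<mu>\<close>, phase velocity \<open>\<gamma>\<close> and initial sign \<open>v\<close>, where \<open>R\<^sup>2 = \<mu>\<^sup>2 - \<gamma>\<^sup>2\<close>.\<close>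
definition telegraph_cf :: "complex \<Rightarrow> real \<Rightarrow> real \<Rightarrow> real \<Rightarrow> complex \<Rightarrow> complex" where
  "telegraph_cf R \<mu> \<gamma> v z =
     exp (- of_real \<mu> * z) * (cosh_lin R z + (of_real \<mu> + \<i> * of_real \<gamma> * of_real v) * sinh_lin R z)"

lemma telegraph_cf_0 [simp]: "telegraph_cf R \<mu> \<gamma> v 0 = 1"
  by (simp add: telegraph_cf_def cosh_lin_def sinh_lin_def)

lemma telegraph_cf_has_field_derivative:
  assumes R: "R\<^sup>2 = of_real (\<mu>\<^sup>2 - \<gamma>\<^sup>2)" and v: "v\<^sup>2 = 1"
  shows "(telegraph_cf R \<mu> \<gamma> v has_field_derivative
     ((\<i> * of_real \<gamma> * of_real v - of_real \<mu>) * telegraph_cf R \<mu> \<gamma> v z + of_real \<mu> * telegraph_cf R \<mu> \<gamma> (- v) z)) (at z)"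
proof -
  have "(telegraph_cf R \<mu> \<gamma> v has_field_derivative
     (- of_real \<mu> * exp (- of_real \<mu> * z) * (cosh_lin R z + (of_real \<mu> + \<i> * of_real \<gamma> * of_real v) * sinh_lin R z)
      + exp (- of_real \<mu> * z) * (R\<^sup>2 * sinh_lin R z + (of_real \<mu> + \<i> * of_real \<gamma> * of_real v) * cosh_lin R z))) (at z)"
    unfolding telegraph_cf_def
    by (rule derivative_eq_intros cosh_lin_has_field_derivative sinh_lin_has_field_derivative refl)+
       (simp add: algebra_simps)
  moreover have "(of_real v :: complex)\<^sup>2 = 1"
    using v by (metis of_real_eq_1_iff of_real_power)
  then have "- of_real \<mu> * exp (- of_real \<mu> * z) * (cosh_lin R z + (of_real \<mu> + \<i> * of_real \<gamma> * of_real v) * sinh_lin R z)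
      + exp (- of_real \<mu> * z) * (R\<^sup>2 * sinh_lin R z + (of_real \<mu> + \<i> * of_real \<gamma> * of_real v) * cosh_lin R z)
    = (\<i> * of_real \<gamma> * of_real v - of_real \<mu>) * telegraph_cf R \<mu> \<gamma> v z + of_real \<mu> * telegraph_cf R \<mu> \<gamma> (- v) z"
    unfolding telegraph_cf_def R by (simp add: algebra_simps power2_eq_square)
  ultimately show ?thesis
    by simp
qed

lemma telegraph_cf_plus_minus:
  "telegraph_cf R \<mu> \<gamma> 1 (of_real t) + telegraph_cf R \<mu> \<gamma> (- 1) (of_real t) = of_real (exp (- \<mu> * t)) * phi R \<mu> t"
proof -
  have "telegraph_cf R \<mu> \<gamma> 1 (of_real t) + telegraph_cf R \<mu> \<gamma> (- 1) (of_real t) =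
      exp (- of_real \<mu> * of_real t) * (2 * cosh_lin R (of_real t) + 2 * of_real \<mu> * sinh_lin R (of_real t))"
    by (simp add: telegraph_cf_def algebra_simps)
  also have "2 * cosh_lin R (of_real t) + 2 * of_real \<mu> * sinh_lin R (of_real t) = phi R \<mu> t"
    by (cases "R = 0") (simp_all add: cosh_lin_def sinh_lin_def phi_def field_simps)
  finally show ?thesis
    by (simp flip: exp_of_real)
qed

text \<open>The coordinates of \<open>d\<^sub>j\<close> along \<open>(1, -1)\<close> and \<open>(1, 1)\<close>. A turn flips exactly one of the two
  signs, the first with probability \<open>p\<close> and the second with probability \<open>1 - p\<close>, so the walk is a
  pair of independent telegraph processes along the diagonals.\<close>
definition sign_antidiag :: "nat \<Rightarrow> real" where
  "sign_antidiag j = (if j = 0 \<or> j = 3 then 1 else - 1)"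

definition sign_diag :: "nat \<Rightarrow> real" where
  "sign_diag j = (if j = 0 \<or> j = 1 then 1 else - 1)"

lemma proj_dir_simps: "proj_dir a b 0 = a" "proj_dir a b 1 = b" "proj_dir a b 2 = - a" "proj_dir a b 3 = - b"
proof -
  have "cos (3 * pi / 2) = cos (pi / 2 + pi)" "sin (3 * pi / 2) = sin (pi / 2 + pi)"
    by (simp_all add: field_simps)
  then have "cos (pi * 3 / 2) = 0" "sin (pi * 3 / 2) = - 1"
    by (simp_all only: cos_periodic_pi sin_periodic_pi cos_pi_half sin_pi_half minus_zero mult.commute)
  then show "proj_dir a b 0 = a" "proj_dir a b 1 = b" "proj_dir a b 2 = - a" "proj_dir a b 3 = - b"
    by (simp_all add: proj_dir_def)
qed

lemma less_4_cases: "j < 4 \<Longrightarrow> j = 0 \<or> j = 1 \<or> j = 2 \<or> j = (3::nat)"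
  by auto

lemma proj_dir_eq_signs:
  "j < 4 \<Longrightarrow> c * proj_dir a b j = c * (a - b) / 2 * sign_antidiag j + c * (a + b) / 2 * sign_diag j"
  by (drule less_4_cases) (auto simp: proj_dir_simps[simplified] sign_antidiag_def sign_diag_def field_simps)

lemma signs_turn:
  "j < 4 \<Longrightarrow> sign_antidiag (turn j True) = - sign_antidiag j \<and> sign_diag (turn j True) = sign_diag j \<and>
     sign_antidiag (turn j False) = sign_antidiag j \<and> sign_diag (turn j False) = - sign_diag j"
  by (drule less_4_cases) (auto simp: turn_def sign_antidiag_def sign_diag_def)

lemma signs_squared: "(sign_antidiag j)\<^sup>2 = 1" "(sign_diag j)\<^sup>2 = 1"
  by (simp_all add: sign_antidiag_def sign_diag_def)

lemma Afun_squared: "(Afun lam p c a b)\<^sup>2 = of_real ((lam * p)\<^sup>2 - (c * (a - b) / 2)\<^sup>2)"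
  unfolding Afun_def power_divide power2_csqrt by (simp add: field_simps power2_eq_square)

lemma Bfun_squared: "(Bfun lam p c a b)\<^sup>2 = of_real ((lam * (1 - p))\<^sup>2 - (c * (a + b) / 2)\<^sup>2)"
  unfolding Bfun_def power_divide power2_csqrt by (simp add: field_simps power2_eq_square)

definition closed_cf :: "real \<Rightarrow> real \<Rightarrow> real \<Rightarrow> real \<Rightarrow> real \<Rightarrow> nat \<Rightarrow> complex \<Rightarrow> complex" where
  "closed_cf lam p c a b j z =
     telegraph_cf (Afun lam p c a b) (lam * p) (c * (a - b) / 2) (sign_antidiag j) z *
     telegraph_cf (Bfun lam p c a b) (lam * (1 - p)) (c * (a + b) / 2) (sign_diag j) z"

lemma closed_cf_has_field_derivative:
  assumes j: "j < 4"
  shows "(closed_cf lam p c a b j has_field_derivative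
     ((\<i> * of_real (c * proj_dir a b j) - of_real lam) * closed_cf lam p c a b j z
      + of_real lam * (of_real p * closed_cf lam p c a b (turn j True) z
                       + of_real (1 - p) * closed_cf lam p c a b (turn j False) z))) (at z)"
proof -
  let ?T1 = "telegraph_cf (Afun lam p c a b) (lam * p) (c * (a - b) / 2)"
  let ?T2 = "telegraph_cf (Bfun lam p c a b) (lam * (1 - p)) (c * (a + b) / 2)"
  let ?v1 = "sign_antidiag j" and ?v2 = "sign_diag j"
  note T1 = telegraph_cf_has_field_derivative[OF Afun_squared signs_squared(1)]
  note T2 = telegraph_cf_has_field_derivative[OF Bfun_squared signs_squared(2)]
  have "(closed_cf lam p c a b j has_field_derivative
     (((\<i> * of_real (c * (a - b) / 2) * of_real ?v1 - of_real (lam * p)) * ?T1 ?v1 z + of_real (lam * p) * ?T1 (- ?v1) z) * ?T2 ?v2 z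
      + ?T1 ?v1 z * ((\<i> * of_real (c * (a + b) / 2) * of_real ?v2 - of_real (lam * (1 - p))) * ?T2 ?v2 z
                     + of_real (lam * (1 - p)) * ?T2 (- ?v2) z))) (at z)"
    unfolding closed_cf_def[abs_def] by (rule derivative_eq_intros T1 T2 refl | simp only: mult.commute)+
  moreover have "closed_cf lam p c a b (turn j True) z = ?T1 (- ?v1) z * ?T2 ?v2 z"
    "closed_cf lam p c a b (turn j False) z = ?T1 ?v1 z * ?T2 (- ?v2) z"
    "closed_cf lam p c a b j z = ?T1 ?v1 z * ?T2 ?v2 z"
    using signs_turn[OF j] by (simp_all add: closed_cf_def)
  moreover have "(of_real (c * proj_dir a b j) :: complex) =
      of_real (c * (a - b) / 2) * of_real ?v1 + of_real (c * (a + b) / 2) * of_real ?v2"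
    using proj_dir_eq_signs[OF j, of c a b] by (metis of_real_add of_real_mult)
  ultimately show ?thesis
    by (simp add: algebra_simps)
qed

definition closed_cf_real :: "real \<Rightarrow> real \<Rightarrow> real \<Rightarrow> real \<Rightarrow> real \<Rightarrow> nat \<Rightarrow> real \<Rightarrow> complex" where
  "closed_cf_real lam p c a b j t = closed_cf lam p c a b j (of_real t)"

lemma continuous_on_closed_cf_real: "j < 4 \<Longrightarrow> continuous_on S (closed_cf_real lam p c a b j)"
proof -
  assume "j < 4"
  then have cont: "isCont (closed_cf lam p c a b j) z" for z
    using closed_cf_has_field_derivative DERIV_isCont by blast
  show ?thesis
    unfolding closed_cf_real_def
    by (intro continuous_at_imp_continuous_on ballI continuous_intros isCont_o2[OF _ cont])
qed

lemma exp_cis_split: "exp ((\<i> * of_real k - of_real lam) * of_real s) = of_real (exp (- lam * s)) * cis (k * s)"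
proof -
  have "(\<i> * of_real k - of_real lam) * of_real s = of_real (- lam * s) + \<i> * of_real (k * s)"
    by (simp add: algebra_simps)
  then show ?thesis
    by (simp only: exp_add cis_conv_exp exp_of_real)
qed

text \<open>Variation of constants for \<open>closed_cf_has_field_derivative\<close>, with the integrating factor
  \<open>exp ((\<i> k - lam) s)\<close>.\<close>
lemma closed_cf_variation_of_constants:
  fixes lam p c a b t :: real
  assumes j: "j < 4" and t: "0 \<le> t"
  defines "k \<equiv> c * proj_dir a b j"
  shows "((\<lambda>s. of_real (lam * exp (- lam * s)) * cis (k * s) *
             (of_real p * closed_cf_real lam p c a b (turn j True) (t - s)
              + of_real (1 - p) * closed_cf_real lam p c a b (turn j False) (t - s)))
          has_integral (closed_cf_real lam p c a b j t - of_real (exp (- lam * t)) * cis (k * t))) {0..t}"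
proof -
  let ?G = "closed_cf lam p c a b"
  define E where "E z = exp ((\<i> * of_real k - of_real lam) * z)" for z
  define D where "D z = of_real lam * (of_real p * ?G (turn j True) z + of_real (1 - p) * ?G (turn j False) z)" for z
  define \<Psi> where "\<Psi> z = E z * ?G j (of_real t - z)" for z
  have "(\<Psi> has_field_derivative (- (E z * D (of_real t - z)))) (at z)" for z
  proof -
    have "((\<lambda>z. of_real t - z) has_field_derivative (- 1)) (at z)"
      by (rule derivative_eq_intros refl | simp)+
    from DERIV_chain2[OF closed_cf_has_field_derivative[OF j, of lam p c a b "of_real t - z", folded k_def D_def] this]
    have dG: "((\<lambda>z. ?G j (of_real t - z)) has_field_derivative
        (((\<i> * of_real k - of_real lam) * ?G j (of_real t - z) + D (of_real t - z)) * (- 1))) (at z)"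
      by simp
    have dE: "(E has_field_derivative ((\<i> * of_real k - of_real lam) * E z)) (at z)"
      unfolding E_def by (rule derivative_eq_intros refl)+ simp
    show ?thesis
      unfolding \<Psi>_def[abs_def] by (rule derivative_eq_intros dE dG refl)+ (simp add: algebra_simps)
  qed
  then have "((\<lambda>s. - (E (of_real s) * D (of_real t - of_real s))) has_integral (\<Psi> (of_real t) - \<Psi> (of_real 0))) {0..t}"
    by (intro fundamental_theorem_of_calculus[OF t] has_vector_derivative_real_field)
  from has_integral_neg[OF this]
  have "((\<lambda>s. E (of_real s) * D (of_real t - of_real s)) has_integral (\<Psi> (of_real 0) - \<Psi> (of_real t))) {0..t}"
    by simp
  moreover have "E (of_real s) * D (of_real t - of_real s) =
      of_real (lam * exp (- lam * s)) * cis (k * s) *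
      (of_real p * closed_cf_real lam p c a b (turn j True) (t - s)
       + of_real (1 - p) * closed_cf_real lam p c a b (turn j False) (t - s))" for s
    unfolding E_def exp_cis_split by (simp add: D_def closed_cf_real_def algebra_simps)
  moreover have "\<Psi> (of_real t) = of_real (exp (- lam * t)) * cis (k * t)"
    by (simp add: \<Psi>_def E_def exp_cis_split closed_cf_def)
  moreover have "\<Psi> (of_real 0) = closed_cf_real lam p c a b j t"
    by (simp add: \<Psi>_def E_def closed_cf_real_def closed_cf_def)
  ultimately show ?thesis
    by simp
qed

lemma closed_cf_renewal_equation:
  assumes j: "j < 4" and t: "0 \<le> t"
  shows "closed_cf_real lam p c a b j t =
       of_real (exp (- lam * t)) * cis (c * proj_dir a b j * t)
     + of_real p * renewal_integral lam (c * proj_dir a b j) (closed_cf_real lam p c a b (turn j True)) t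
     + of_real (1 - p) * renewal_integral lam (c * proj_dir a b j) (closed_cf_real lam p c a b (turn j False)) t"
proof -
  let ?k = "c * proj_dir a b j" and ?g = "closed_cf_real lam p c a b"
  let ?K = "\<lambda>b. renewal_integral lam ?k (?g (turn j b)) t"
  define h where "h b s = of_real (lam * exp (- lam * s)) * (cis (?k * s) * ?g (turn j b) (t - s))" for b s
  have "(h b has_integral ?K b) {0..t}" for b
    unfolding h_def
    by (intro has_integral_renewal_integral[OF t] continuous_on_compose2[OF continuous_on_closed_cf_real[OF turn_less_4]]
        continuous_intros) auto
  then have "((\<lambda>s. of_real p * h True s + of_real (1 - p) * h False s) has_integral
      (of_real p * ?K True + of_real (1 - p) * ?K False)) {0..t}"
    by (intro has_integral_add has_integral_mult_right)
  moreover have "(\<lambda>s. of_real p * h True s + of_real (1 - p) * h False s) =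
      (\<lambda>s. of_real (lam * exp (- lam * s)) * cis (?k * s) *
            (of_real p * ?g (turn j True) (t - s) + of_real (1 - p) * ?g (turn j False) (t - s)))"
    unfolding h_def by (rule ext) (simp only: distrib_left mult_ac)
  ultimately have "((\<lambda>s. of_real (lam * exp (- lam * s)) * cis (?k * s) *
            (of_real p * ?g (turn j True) (t - s) + of_real (1 - p) * ?g (turn j False) (t - s)))
      has_integral (of_real p * ?K True + of_real (1 - p) * ?K False)) {0..t}"
    by (simp only:)
  from has_integral_unique[OF closed_cf_variation_of_constants[OF j t] this]
  show ?thesis
    unfolding diff_eq_eq by (simp only: ac_simps)
qed

lemma closed_cf_average:
  "(\<Sum>j<4. closed_cf_real lam p c a b j t) / 4 =
     of_real (exp (- lam * t) / 4) * phi (Afun lam p c a b) (lam * p) t * phi (Bfun lam p c a b) (lam * (1 - p)) t"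
proof -
  let ?T1 = "\<lambda>v. telegraph_cf (Afun lam p c a b) (lam * p) (c * (a - b) / 2) v (of_real t)"
  let ?T2 = "\<lambda>v. telegraph_cf (Bfun lam p c a b) (lam * (1 - p)) (c * (a + b) / 2) v (of_real t)"
  have "(\<Sum>j<4. closed_cf_real lam p c a b j t) = (?T1 1 + ?T1 (- 1)) * (?T2 1 + ?T2 (- 1))"
    by (simp add: eval_nat_numeral closed_cf_real_def closed_cf_def sign_antidiag_def sign_diag_def algebra_simps)
  also have "\<dots> = of_real (exp (- (lam * p) * t) * exp (- (lam * (1 - p)) * t)) *
      phi (Afun lam p c a b) (lam * p) t * phi (Bfun lam p c a b) (lam * (1 - p)) t"
    by (simp only: telegraph_cf_plus_minus of_real_mult mult_ac)
  also have "exp (- (lam * p) * t) * exp (- (lam * (1 - p)) * t) = exp (- lam * t)"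
    by (simp flip: exp_add add: algebra_simps)
  finally show ?thesis
    by simp
qed

lemma phi_of_real_self: "0 \<le> \<mu> \<Longrightarrow> phi (of_real \<mu>) \<mu> t = 2 * of_real (exp (\<mu> * t))"
  by (cases "\<mu> = 0") (simp_all add: phi_def flip: exp_of_real)

lemma closed_cf_average_zero:
  assumes "0 < lam" "0 \<le> p" "p \<le> 1"
  shows "(\<Sum>j<4. closed_cf_real lam p c 0 0 j t) / 4 = 1"
proof -
  have "Afun lam p c 0 0 = of_real (lam * p)" "Bfun lam p c 0 0 = of_real (lam * (1 - p))"
    using assms by (simp_all add: Afun_def Bfun_def real_sqrt_mult csqrt_of_real power_mult_distrib[symmetric])
  moreover have "0 \<le> lam * p" "0 \<le> lam * (1 - p)"
    using assms by simp_all
  ultimately have "(\<Sum>j<4. closed_cf_real lam p c 0 0 j t) / 4 =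
      of_real (exp (- lam * t) / 4) * (2 * of_real (exp (lam * p * t))) * (2 * of_real (exp (lam * (1 - p) * t)))"
    by (simp only: closed_cf_average phi_of_real_self)
  also have "\<dots> = of_real (exp (- lam * t) * exp (lam * p * t) * exp (lam * (1 - p) * t))"
    by simp
  also have "exp (- lam * t) * exp (lam * p * t) * exp (lam * (1 - p) * t) = 1"
    by (simp flip: exp_add add: algebra_simps)
  finally show ?thesis
    by simp
qed

section \<open>The renewal argument\<close>

lemma (in prob_space) integral_indep_var_pair:
  fixes g :: "'b \<times> 'b \<Rightarrow> 'd::{banach, second_countable_topology}"
  assumes indep: "indep_var S X T Y" and [measurable]: "g \<in> borel_measurable (S \<Otimes>\<^sub>M T)"
    and g_bounded: "\<And>z. norm (g z) \<le> B"
  shows "(\<integral>\<omega>. g (X \<omega>, Y \<omega>) \<partial>M) = (\<integral>x. (\<integral>\<omega>. g (x, Y \<omega>) \<partial>M) \<partial>distr M S X)"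
proof -
  have [measurable]: "X \<in> measurable M S" "Y \<in> measurable M T"
    using indep_var_rv1[OF indep] indep_var_rv2[OF indep] .
  interpret PX: prob_space "distr M S X" by (rule prob_space_distr) simp
  interpret PY: prob_space "distr M T Y" by (rule prob_space_distr) simp
  interpret PXY: pair_prob_space "distr M S X" "distr M T Y" ..
  have "integrable (distr M S X \<Otimes>\<^sub>M distr M T Y) g"
    by (rule PXY.P.integrable_const_bound[where B=B]) (auto simp: g_bounded)
  have "(\<integral>\<omega>. g (X \<omega>, Y \<omega>) \<partial>M) = integral\<^sup>L (distr M (S \<Otimes>\<^sub>M T) (\<lambda>x. (X x, Y x))) g"
    by (subst integral_distr) auto
  also have "\<dots> = integral\<^sup>L (distr M S X \<Otimes>\<^sub>M distr M T Y) g"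
    using indep by (simp add: indep_var_distribution_eq)
  also have "\<dots> = (\<integral>x. (\<integral>y. g (x, y) \<partial>distr M T Y) \<partial>distr M S X)"
    by (rule PXY.integral_fst'[symmetric]) fact
  also have "\<dots> = (\<integral>x. (\<integral>\<omega>. g (x, Y \<omega>) \<partial>M) \<partial>distr M S X)"
  proof (rule Bochner_Integration.integral_cong[OF refl])
    fix x assume "x \<in> space (distr M S X)"
    then have "x \<in> space S" by simp
    then have "(\<lambda>y. g (x, y)) \<in> borel_measurable T" by measurable
    then show "(\<integral>y. g (x, y) \<partial>distr M T Y) = (\<integral>\<omega>. g (x, Y \<omega>) \<partial>M)"
      by (subst integral_distr) auto
  qed
  finally show ?thesis .
qed

lemma (in prob_space) integral_indep_var_mult:
  fixes f h :: "'b \<Rightarrow> complex"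
  assumes indep: "indep_var S X T Y"
    and [measurable]: "f \<in> borel_measurable S" "h \<in> borel_measurable T"
    and f_bounded: "\<And>z. norm (f z) \<le> Bf" and h_bounded: "\<And>z. norm (h z) \<le> Bh"
  shows "(\<integral>\<omega>. f (X \<omega>) * h (Y \<omega>) \<partial>M) = (\<integral>\<omega>. f (X \<omega>) \<partial>M) * (\<integral>\<omega>. h (Y \<omega>) \<partial>M)"
proof -
  have [measurable]: "X \<in> measurable M S"
    using indep_var_rv1[OF indep] .
  have product_measurable: "(\<lambda>z. f (fst z) * h (snd z)) \<in> borel_measurable (S \<Otimes>\<^sub>M T)"
    by measurable
  have product_bounded: "norm (f (fst z) * h (snd z)) \<le> Bf * Bh" for z
    unfolding norm_mult by (rule mult_mono) (use f_bounded h_bounded norm_ge_zero order_trans in blast)+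
  note pair = integral_indep_var_pair[OF indep product_measurable product_bounded]
  have "(\<integral>\<omega>. f (X \<omega>) * h (Y \<omega>) \<partial>M) = (\<integral>\<omega>. (\<lambda>z. f (fst z) * h (snd z)) (X \<omega>, Y \<omega>) \<partial>M)"
    by simp
  also have "\<dots> = (\<integral>x. (\<integral>\<omega>. (\<lambda>z. f (fst z) * h (snd z)) (x, Y \<omega>) \<partial>M) \<partial>distr M S X)"
    by (rule pair)
  also have "\<dots> = (\<integral>x. f x \<partial>distr M S X) * (\<integral>\<omega>. h (Y \<omega>) \<partial>M)"
    by simp
  also have "(\<integral>x. f x \<partial>distr M S X) = (\<integral>\<omega>. f (X \<omega>) \<partial>M)"
    by (subst integral_distr) auto
  finally show ?thesis .
qed

definition sources_from :: "nat \<Rightarrow> src set" where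
  "sources_from m = Wait ` {m..} \<union> Turn ` {m..}"

locale orthogonal_walk = prob_space M for M :: "'a measure" +
  fixes lam p :: real and D0 :: "'a \<Rightarrow> nat" and \<tau> :: "nat \<Rightarrow> 'a \<Rightarrow> real" and \<xi> :: "nat \<Rightarrow> 'a \<Rightarrow> bool"
  assumes lam_pos: "0 < lam" and p_nonneg: "0 \<le> p" and p_le_1: "p \<le> 1"
    and D0_measurable [measurable]: "D0 \<in> measurable M (count_space UNIV)"
    and wait_measurable [measurable]: "\<And>k. \<tau> k \<in> borel_measurable M"
    and turn_measurable [measurable]: "\<And>k. \<xi> k \<in> measurable M (count_space UNIV)"
    and indep_sources: "indep_vars (\<lambda>_. borel) (src_rv D0 \<tau> \<xi>) UNIV"
    and D0_uniform: "\<forall>j<4. prob {\<omega> \<in> space M. D0 \<omega> = j} = 1/4"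
    and wait_exponential: "\<And>k. distributed M lborel (\<tau> k) (exponential_density lam)"
    and turn_prob: "\<And>k. prob {\<omega> \<in> space M. \<xi> k \<omega>} = p"
begin

abbreviation src :: "src \<Rightarrow> 'a \<Rightarrow> real" where
  "src \<equiv> src_rv D0 \<tau> \<xi>"

abbreviation sources :: "src set \<Rightarrow> 'a \<Rightarrow> src \<Rightarrow> real" where
  "sources B \<omega> \<equiv> restrict (\<lambda>i. src i \<omega>) B"

lemma src_simps [simp]: "src (Wait k) \<omega> = \<tau> k \<omega>" "src (Turn k) \<omega> = of_bool (\<xi> k \<omega>)" "src Dir0 \<omega> = real (D0 \<omega>)"
  by (simp_all add: src_rv_def)

lemma sources_measurable [measurable]: "sources B \<in> measurable M (PiM B (\<lambda>_. borel))"
proof (rule measurable_restrict)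
  show "(\<lambda>\<omega>. src i \<omega>) \<in> borel_measurable M" for i
    by (cases i; simp only: src_simps; measurable)
qed

lemma integral_source_mult:
  fixes f :: "real \<Rightarrow> complex" and g :: "(src \<Rightarrow> real) \<Rightarrow> complex"
  assumes "i \<notin> B"
    and f_measurable [measurable]: "f \<in> borel_measurable borel"
    and g_measurable: "g \<in> borel_measurable (PiM B (\<lambda>_. borel))"
    and "\<And>r. norm (f r) \<le> 1" "\<And>y. norm (g y) \<le> 1"
  shows "(\<integral>\<omega>. f (src i \<omega>) * g (sources B \<omega>) \<partial>M) = (\<integral>\<omega>. f (src i \<omega>) \<partial>M) * (\<integral>\<omega>. g (sources B \<omega>) \<partial>M)"
proof -
  have indep: "indep_var (PiM {i} (\<lambda>_. borel)) (sources {i}) (PiM B (\<lambda>_. borel)) (sources B)"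
    using assms(1) by (intro indep_var_restrict[OF indep_sources]) auto
  have f_component: "(\<lambda>y. f (y i)) \<in> borel_measurable (PiM {i} (\<lambda>_. borel))"
    by measurable
  have "(\<integral>\<omega>. f (sources {i} \<omega> i) * g (sources B \<omega>) \<partial>M) =
      (\<integral>\<omega>. f (sources {i} \<omega> i) \<partial>M) * (\<integral>\<omega>. g (sources B \<omega>) \<partial>M)"
    by (rule integral_indep_var_mult[OF indep f_component g_measurable, where Bf=1 and Bh=1]) (use assms(4,5) in auto)
  then show ?thesis
    by simp
qed

lemma integral_wait_first:
  fixes h :: "real \<Rightarrow> (src \<Rightarrow> real) \<Rightarrow> complex"
  assumes h_measurable: "(\<lambda>z. h (fst z) (snd z)) \<in> borel_measurable (borel \<Otimes>\<^sub>M PiM (sources_from (Suc m)) (\<lambda>_. borel))"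
    and h_bounded: "\<And>s y. norm (h s y) \<le> 1"
  shows "(\<integral>\<omega>. h (\<tau> m \<omega>) (sources (sources_from (Suc m)) \<omega>) \<partial>M) =
         (\<integral>s. exponential_density lam s *\<^sub>R (\<integral>\<omega>. h s (sources (sources_from (Suc m)) \<omega>) \<partial>M) \<partial>lborel)"
proof -
  let ?S = "sources_from (Suc m)"
  let ?W = "PiM {Wait m} (\<lambda>_. borel :: real measure)" and ?P = "PiM ?S (\<lambda>_. borel :: real measure)"
  define \<phi> where "\<phi> s = (\<integral>\<omega>. h s (sources ?S \<omega>) \<partial>M)" for s
  have [measurable]: "(\<lambda>x. x (Wait m)) \<in> borel_measurable ?W"
    by (rule measurable_component_singleton) simp
  have "(\<lambda>z. (fst z, sources ?S (snd z))) \<in> measurable (borel \<Otimes>\<^sub>M M) (borel \<Otimes>\<^sub>M ?P)"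
    by measurable
  from measurable_compose[OF this h_measurable]
  have "(\<lambda>(s, \<omega>). h s (sources ?S \<omega>)) \<in> borel_measurable (borel \<Otimes>\<^sub>M M)"
    by (simp add: case_prod_beta')
  then have [measurable]: "\<phi> \<in> borel_measurable borel"
    unfolding \<phi>_def by (rule borel_measurable_lebesgue_integral)
  have "(\<lambda>z. (fst z (Wait m), snd z)) \<in> measurable (?W \<Otimes>\<^sub>M ?P) (borel \<Otimes>\<^sub>M ?P)"
    by measurable
  from measurable_compose[OF this h_measurable]
  have first_measurable: "(\<lambda>z. h (fst z (Wait m)) (snd z)) \<in> borel_measurable (?W \<Otimes>\<^sub>M ?P)"
    by simp
  have indep: "indep_var ?W (sources {Wait m}) ?P (sources ?S)"
    by (intro indep_var_restrict[OF indep_sources]) (auto simp: sources_from_def)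
  note pair = integral_indep_var_pair[OF indep first_measurable h_bounded]
  have "(\<integral>\<omega>. h (\<tau> m \<omega>) (sources ?S \<omega>) \<partial>M) =
      (\<integral>\<omega>. (\<lambda>z. h (fst z (Wait m)) (snd z)) (sources {Wait m} \<omega>, sources ?S \<omega>) \<partial>M)"
    by simp
  also have "\<dots> = (\<integral>x. (\<integral>\<omega>. (\<lambda>z. h (fst z (Wait m)) (snd z)) (x, sources ?S \<omega>) \<partial>M) \<partial>distr M ?W (sources {Wait m}))"
    by (rule pair)
  also have "\<dots> = (\<integral>x. \<phi> (x (Wait m)) \<partial>distr M ?W (sources {Wait m}))"
    by (simp add: \<phi>_def)
  also have "\<dots> = (\<integral>\<omega>. \<phi> (\<tau> m \<omega>) \<partial>M)"
    by (subst integral_distr) auto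
  also have "\<dots> = (\<integral>s. \<phi> s \<partial>distr M lborel (\<tau> m))"
    by (subst integral_distr) auto
  also have "distr M lborel (\<tau> m) = density lborel (\<lambda>x. ennreal (exponential_density lam x))"
    using wait_exponential[of m] by (simp add: distributed_def)
  also have "(\<integral>s. \<phi> s \<partial>density lborel (\<lambda>x. ennreal (exponential_density lam x))) =
      (\<integral>s. exponential_density lam s *\<^sub>R \<phi> s \<partial>lborel)"
    using lam_pos by (subst integral_density) (auto simp: exponential_density_nonneg)
  finally show ?thesis
    unfolding \<phi>_def .
qed

lemma integral_turn_indicator:
  "(\<integral>\<omega>. of_bool (\<xi> m \<omega> = u) \<partial>M) = (of_real (if u then p else 1 - p) :: complex)"
proof -
  have [measurable]: "Measurable.pred M (\<xi> m)"
    using turn_measurable[of m] by simp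
  have true: "(\<integral>\<omega>. of_bool (\<xi> m \<omega>) \<partial>M) = (of_real p :: complex)"
  proof -
    have "(\<integral>\<omega>. of_bool (\<xi> m \<omega>) \<partial>M) = (\<integral>\<omega>. of_real (indicator {\<omega> \<in> space M. \<xi> m \<omega>} \<omega>) \<partial>M :: complex)"
      by (intro Bochner_Integration.integral_cong) (auto simp: indicator_def)
    then show ?thesis
      using turn_prob[of m] by (simp add: measure_def)
  qed
  have "(\<integral>\<omega>. of_bool (\<not> \<xi> m \<omega>) \<partial>M) = (\<integral>\<omega>. 1 - of_bool (\<xi> m \<omega>) \<partial>M :: complex)"
    by (intro Bochner_Integration.integral_cong) auto
  also have "\<dots> = 1 - of_real p"
    using true by (subst Bochner_Integration.integral_diff) (auto simp: prob_space intro!: integrable_const_bound[where B=1])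
  finally show ?thesis
    using true by (cases u) simp_all
qed

lemma integral_turn_first:
  fixes h :: "real \<Rightarrow> (src \<Rightarrow> real) \<Rightarrow> complex"
  assumes h_measurable: "(\<lambda>z. h (fst z) (snd z)) \<in> borel_measurable (borel \<Otimes>\<^sub>M PiM (sources_from (Suc m)) (\<lambda>_. borel))"
    and h_bounded: "\<And>s y. norm (h s y) \<le> 1"
  shows "(\<integral>\<omega>. of_bool (\<xi> m \<omega> = u) * h (\<tau> m \<omega>) (sources (sources_from (Suc m)) \<omega>) \<partial>M) =
         of_real (if u then p else 1 - p) * (\<integral>\<omega>. h (\<tau> m \<omega>) (sources (sources_from (Suc m)) \<omega>) \<partial>M)"
proof -
  let ?S = "sources_from (Suc m)"
  have "(\<lambda>y. (y (Wait m), restrict y ?S)) \<in> measurable (PiM (insert (Wait m) ?S) (\<lambda>_. borel)) (borel \<Otimes>\<^sub>M PiM ?S (\<lambda>_. borel))"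
    by (intro measurable_Pair measurable_component_singleton[where M="\<lambda>_. borel"] measurable_restrict_subset) auto
  from measurable_compose[OF this h_measurable]
  have g_measurable: "(\<lambda>y. h (y (Wait m)) (restrict y ?S)) \<in> borel_measurable (PiM (insert (Wait m) ?S) (\<lambda>_. borel))"
    by simp
  have f_measurable: "(\<lambda>r::real. of_bool ((r = 1) = u) :: complex) \<in> borel_measurable borel"
    by measurable
  have S: "Turn m \<notin> insert (Wait m) ?S" "Wait m \<notin> ?S"
    by (auto simp: sources_from_def)
  from integral_source_mult[where f="\<lambda>r. of_bool ((r = 1) = u)" and g="\<lambda>y. h (y (Wait m)) (restrict y ?S)",
      OF S(1) f_measurable g_measurable _ h_bounded]
  show ?thesis
    using S(2) by (simp add: integral_turn_indicator)
qed

text \<open>The expected phasor of the walk restarted at its \<open>m\<close>-th event in direction \<open>j\<close>.\<close>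
definition mean_phasor :: "real \<Rightarrow> real \<Rightarrow> real \<Rightarrow> nat \<Rightarrow> nat \<Rightarrow> nat \<Rightarrow> real \<Rightarrow> complex" where
  "mean_phasor c a b n m j t = (\<integral>\<omega>. phasor c a b n j t (\<lambda>k. \<tau> (m + k) \<omega>) (\<lambda>k. \<xi> (m + k) \<omega>) \<partial>M)"

lemma norm_mean_phasor_le: "norm (mean_phasor c a b n m j t) \<le> 1"
proof -
  have "(\<lambda>\<omega>. phasor c a b n j t (\<lambda>k. \<tau> (m + k) \<omega>) (\<lambda>k. \<xi> (m + k) \<omega>)) \<in> borel_measurable M"
    by (rule phasor_measurable) simp_all
  then have "norm (mean_phasor c a b n m j t) \<le> (\<integral>\<omega>. 1 \<partial>M)"
    unfolding mean_phasor_def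
    by (intro order.trans[OF integral_norm_bound] integral_mono integrable_norm integrable_const_bound[where B=1])
       (auto simp: norm_phasor_le)
  then show ?thesis
    by (simp add: prob_space)
qed

lemma mean_phasor_shift_measurable: "(\<lambda>s. mean_phasor c a b n m j (t - s)) \<in> borel_measurable borel"
proof -
  have "(\<lambda>z. phasor c a b n j (t - fst z) (\<lambda>k. \<tau> (m + k) (snd z)) (\<lambda>k. \<xi> (m + k) (snd z)))
      \<in> borel_measurable (borel \<Otimes>\<^sub>M M)"
    by (rule phasor_measurable) simp_all
  then show ?thesis
    unfolding mean_phasor_def by (intro borel_measurable_lebesgue_integral) (simp add: case_prod_beta')
qed

lemma mean_phasor_0:
  "mean_phasor c a b 0 m j t = (if 0 \<le> t then of_real (exp (- lam * t)) * cis (c * proj_dir a b j * t) else 0)"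
proof (cases "0 \<le> t")
  case True
  have "mean_phasor c a b 0 m j t =
      (\<integral>\<omega>. of_real (indicator {\<omega> \<in> space M. t < \<tau> m \<omega>} \<omega>) * cis (c * t * proj_dir a b j) \<partial>M)"
    unfolding mean_phasor_def using True by (intro Bochner_Integration.integral_cong) (auto simp: indicator_def)
  also have "\<dots> = of_real (prob {\<omega> \<in> space M. t < \<tau> m \<omega>}) * cis (c * t * proj_dir a b j)"
    by (simp add: measure_def)
  also have "prob {\<omega> \<in> space M. t < \<tau> m \<omega>} = exp (- t * lam)"
    using exponential_distributedD_gt[OF wait_exponential True lam_pos] .
  finally show ?thesis
    using True by (simp add: mult_ac)
qed (simp add: mean_phasor_def)

text \<open>Renewal at the first event: the first flight time is exponential and the first turn is
  independent of it and of everything that follows.\<close>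
lemma mean_phasor_Suc:
  "mean_phasor c a b (Suc n) m j t =
     of_real p * renewal_integral lam (c * proj_dir a b j) (mean_phasor c a b n (Suc m) (turn j True)) t
   + of_real (1 - p) * renewal_integral lam (c * proj_dir a b j) (mean_phasor c a b n (Suc m) (turn j False)) t"
proof -
  define S where "S = sources_from (Suc m)"
  \<comment> \<open>Turns enter \<^const>\<open>src_rv\<close> as the reals \<open>0\<close> and \<open>1\<close>.\<close>
  define h where "h u s y = (if 0 \<le> s \<and> s \<le> t then cis (c * proj_dir a b j * s) *
      phasor c a b n (turn j u) (t - s) (\<lambda>k. y (Wait (Suc m + k))) (\<lambda>k. y (Turn (Suc m + k)) = 1) else 0)"
    for u s and y :: "src \<Rightarrow> real"
  have in_S: "Wait (Suc m + k) \<in> S" "Turn (Suc m + k) \<in> S" for k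
    by (auto simp: S_def sources_from_def)
  have h_sources: "h u s (sources S \<omega>) = (if 0 \<le> s \<and> s \<le> t then cis (c * proj_dir a b j * s) *
      phasor c a b n (turn j u) (t - s) (\<lambda>k. \<tau> (Suc m + k) \<omega>) (\<lambda>k. \<xi> (Suc m + k) \<omega>) else 0)" for u s \<omega>
    by (simp add: h_def in_S[simplified])
  have h_measurable [measurable]: "(\<lambda>z. h u (fst z) (snd z)) \<in> borel_measurable (borel \<Otimes>\<^sub>M PiM S (\<lambda>_. borel))" for u
  proof -
    have [measurable]: "(\<lambda>z. snd z i) \<in> borel_measurable (borel \<Otimes>\<^sub>M PiM S (\<lambda>_. borel))" if "i \<in> S" for i
      using that by (intro measurable_compose[OF measurable_snd measurable_component_singleton])
    have "(\<lambda>z. phasor c a b n (turn j u) (t - fst z) (\<lambda>k. snd z (Wait (Suc m + k))) (\<lambda>k. snd z (Turn (Suc m + k)) = 1))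
        \<in> borel_measurable (borel \<Otimes>\<^sub>M PiM S (\<lambda>_. borel))"
      using in_S by (intro phasor_measurable) measurable
    then show ?thesis
      unfolding h_def cis_conv_exp by measurable
  qed
  have h_bounded: "norm (h u s y) \<le> 1" for u s y
    by (simp add: h_def norm_mult norm_phasor_le)
  let ?Q = "\<lambda>u \<omega>. h u (\<tau> m \<omega>) (sources S \<omega>)"
  have Q_integrable: "integrable M (\<lambda>\<omega>. of_bool (\<xi> m \<omega> = u') * ?Q u \<omega>)" for u u'
  proof -
    have "(\<lambda>\<omega>. (\<tau> m \<omega>, sources S \<omega>)) \<in> measurable M (borel \<Otimes>\<^sub>M PiM S (\<lambda>_. borel))"
      by measurable
    from measurable_compose[OF this h_measurable] have [measurable]: "?Q u \<in> borel_measurable M"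
      by simp
    show ?thesis
      by (intro integrable_const_bound[where B=1]) (auto simp: h_bounded)
  qed
  have turn_factor: "(\<integral>\<omega>. of_bool (\<xi> m \<omega> = u') * ?Q u \<omega> \<partial>M) = of_real (if u' then p else 1 - p) * (\<integral>\<omega>. ?Q u \<omega> \<partial>M)"
    for u u'
    using integral_turn_first[OF h_measurable[unfolded S_def] h_bounded] unfolding S_def .
  have wait_factor: "(\<integral>\<omega>. ?Q u \<omega> \<partial>M) = renewal_integral lam (c * proj_dir a b j) (mean_phasor c a b n (Suc m) (turn j u)) t" for u
  proof -
    have inner: "(\<integral>\<omega>. h u s (sources S \<omega>) \<partial>M) =
        (if 0 \<le> s \<and> s \<le> t then cis (c * proj_dir a b j * s) * mean_phasor c a b n (Suc m) (turn j u) (t - s) else 0)" for s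
      unfolding h_sources mean_phasor_def by (cases "0 \<le> s \<and> s \<le> t") auto
    have "(\<integral>\<omega>. ?Q u \<omega> \<partial>M) = (\<integral>s. exponential_density lam s *\<^sub>R (\<integral>\<omega>. h u s (sources S \<omega>) \<partial>M) \<partial>lborel)"
      using integral_wait_first[OF h_measurable[unfolded S_def] h_bounded] unfolding S_def .
    also have "\<dots> = renewal_integral lam (c * proj_dir a b j) (mean_phasor c a b n (Suc m) (turn j u)) t"
      unfolding inner renewal_integral_def by (simp add: scaleR_conv_of_real)
    finally show ?thesis .
  qed
  have "mean_phasor c a b (Suc n) m j t = (\<integral>\<omega>. of_bool (\<xi> m \<omega> = True) * ?Q True \<omega> + of_bool (\<xi> m \<omega> = False) * ?Q False \<omega> \<partial>M)"
    unfolding mean_phasor_def h_sources by (intro Bochner_Integration.integral_cong) (simp_all add: mult_ac)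
  also have "\<dots> = (\<integral>\<omega>. of_bool (\<xi> m \<omega> = True) * ?Q True \<omega> \<partial>M) + (\<integral>\<omega>. of_bool (\<xi> m \<omega> = False) * ?Q False \<omega> \<partial>M)"
    by (intro Bochner_Integration.integral_add Q_integrable)
  finally show ?thesis
    by (simp only: turn_factor wait_factor if_True if_False)
qed

lemma mean_phasor_restart: "mean_phasor c a b n m = mean_phasor c a b n 0"
proof (induction n arbitrary: m)
  case 0
  show ?case by (simp add: fun_eq_iff mean_phasor_0)
next
  case (Suc n)
  show ?case by (simp add: fun_eq_iff mean_phasor_Suc Suc.IH[of "Suc m"] Suc.IH[of "Suc 0"])
qed

lemma sum_mean_phasor_tendsto:
  assumes "j < 4" "0 \<le> t"
  shows "(\<lambda>N. \<Sum>n<N. mean_phasor c a b n 0 j t) \<longlonglongrightarrow> closed_cf_real lam p c a b j t"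
proof (rule renewal_series_tendsto[OF lam_pos p_nonneg p_le_1 _ _ _ _ continuous_on_closed_cf_real
      closed_cf_renewal_equation assms])
  show "mean_phasor c a b 0 0 j x = of_real (exp (- lam * x)) * cis (c * proj_dir a b j * x)" if "0 \<le> x" for j x
    using that by (simp add: mean_phasor_0)
  show "mean_phasor c a b (Suc n) 0 j x =
      of_real p * renewal_integral lam (c * proj_dir a b j) (mean_phasor c a b n 0 (turn j True)) x
    + of_real (1 - p) * renewal_integral lam (c * proj_dir a b j) (mean_phasor c a b n 0 (turn j False)) x" for n j x
    by (simp add: mean_phasor_Suc mean_phasor_restart[of _ _ _ _ "Suc 0"])
qed (simp_all add: mean_phasor_shift_measurable norm_mean_phasor_le)

end

context orthogonal_walk
begin

lemma prob_D0_mod_4: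
  assumes j: "j < 4"
  shows "prob {\<omega> \<in> space M. D0 \<omega> mod 4 = j} = 1/4"
proof -
  define A where "A i = {\<omega> \<in> space M. D0 \<omega> mod 4 = i}" for i
  have A_events: "A i \<in> events" for i
    unfolding A_def by measurable
  have A_ge: "1/4 \<le> prob (A i)" if "i < 4" for i
  proof -
    have "{\<omega> \<in> space M. D0 \<omega> = i} \<subseteq> A i"
      using that by (auto simp: A_def)
    then have "prob {\<omega> \<in> space M. D0 \<omega> = i} \<le> prob (A i)"
      by (intro finite_measure_mono A_events)
    then show ?thesis
      using D0_uniform that by simp
  qed
  have "(\<Sum>i<4. prob (A i)) = prob (\<Union>i<4. A i)"
    by (rule measure_finite_Union[symmetric]) (auto simp: A_events disjoint_family_on_def A_def)
  also have "(\<Union>i<4. A i) = space M"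
    by (auto simp: A_def)
  also have "(\<Sum>i<4. prob (A i)) = prob (A j) + (\<Sum>i\<in>{..<4} - {j}. prob (A i))"
    using j by (subst sum.remove[of _ j]) auto
  finally have "prob (A j) + (\<Sum>i\<in>{..<4} - {j}. prob (A i)) = 1"
    by (simp add: prob_space)
  moreover have "(\<Sum>i\<in>{..<4} - {j}. 1/4) \<le> (\<Sum>i\<in>{..<4} - {j}. prob (A i))"
    by (intro sum_mono A_ge) auto
  moreover have "card ({..<4::nat} - {j}) = 3"
    using j by simp
  ultimately have "prob (A j) \<le> 1/4"
    by simp
  with A_ge[OF j] show ?thesis
    unfolding A_def by simp
qed

lemma phasor_random_start_measurable:
  "(\<lambda>\<omega>. phasor c a b n (D0 \<omega> mod 4) t (\<lambda>k. \<tau> k \<omega>) (\<lambda>k. \<xi> k \<omega>)) \<in> borel_measurable M"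
  by (rule measurable_compose_countable[where f="\<lambda>i \<omega>. phasor c a b n i t (\<lambda>k. \<tau> k \<omega>) (\<lambda>k. \<xi> k \<omega>)"])
     (simp_all add: phasor_measurable)

lemma integral_start_indicator_mult_phasor:
  assumes "j < 4"
  shows "(\<integral>\<omega>. of_bool (D0 \<omega> mod 4 = j) * phasor c a b n j t (\<lambda>k. \<tau> k \<omega>) (\<lambda>k. \<xi> k \<omega>) \<partial>M) =
    mean_phasor c a b n 0 j t / 4"
proof -
  have in_sources: "Wait k \<in> sources_from 0" "Turn k \<in> sources_from 0" for k
    by (simp_all add: sources_from_def)
  have [measurable]: "(\<lambda>y. y i) \<in> borel_measurable (PiM (sources_from 0) (\<lambda>_. borel))" if "i \<in> sources_from 0" for i
    using that by (rule measurable_component_singleton)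
  have "(\<lambda>y. phasor c a b n j t (\<lambda>k. y (Wait k)) (\<lambda>k. y (Turn k) = 1)) \<in> borel_measurable (PiM (sources_from 0) (\<lambda>_. borel))"
    using in_sources by (intro phasor_measurable) measurable
  moreover have "Dir0 \<notin> sources_from 0"
    by (auto simp: sources_from_def)
  moreover have "(\<lambda>r::real. of_bool (nat \<lfloor>r\<rfloor> mod 4 = j) :: complex) \<in> borel_measurable borel"
    by measurable
  ultimately have "(\<integral>\<omega>. of_bool (nat \<lfloor>src Dir0 \<omega>\<rfloor> mod 4 = j) * phasor c a b n j t (\<lambda>k. sources (sources_from 0) \<omega> (Wait k))
        (\<lambda>k. sources (sources_from 0) \<omega> (Turn k) = 1) \<partial>M) =
      (\<integral>\<omega>. of_bool (nat \<lfloor>src Dir0 \<omega>\<rfloor> mod 4 = j) \<partial>M) * (\<integral>\<omega>. phasor c a b n j t (\<lambda>k. sources (sources_from 0) \<omega> (Wait k))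
        (\<lambda>k. sources (sources_from 0) \<omega> (Turn k) = 1) \<partial>M)"
    by (intro integral_source_mult) (auto simp: norm_phasor_le)
  then have "(\<integral>\<omega>. of_bool (D0 \<omega> mod 4 = j) * phasor c a b n j t (\<lambda>k. \<tau> k \<omega>) (\<lambda>k. \<xi> k \<omega>) \<partial>M) =
      (\<integral>\<omega>. of_bool (D0 \<omega> mod 4 = j) \<partial>M) * mean_phasor c a b n 0 j t"
    by (simp add: sources_from_def in_sources mean_phasor_def)
  also have "(\<integral>\<omega>. of_bool (D0 \<omega> mod 4 = j) \<partial>M) = (\<integral>\<omega>. of_real (indicator {\<omega> \<in> space M. D0 \<omega> mod 4 = j} \<omega>) \<partial>M :: complex)"
    by (intro Bochner_Integration.integral_cong) (auto simp: indicator_def)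
  also have "\<dots> = of_real (prob {\<omega> \<in> space M. D0 \<omega> mod 4 = j})"
    by (simp add: Int_absorb2)
  also have "\<dots> = 1/4"
    using assms by (simp add: prob_D0_mod_4)
  finally show ?thesis
    by simp
qed

lemma integral_phasor_random_start:
  "(\<integral>\<omega>. phasor c a b n (D0 \<omega> mod 4) t (\<lambda>k. \<tau> k \<omega>) (\<lambda>k. \<xi> k \<omega>) \<partial>M) = (\<Sum>j<4. mean_phasor c a b n 0 j t) / 4"
proof -
  let ?H = "\<lambda>j \<omega>. phasor c a b n j t (\<lambda>k. \<tau> k \<omega>) (\<lambda>k. \<xi> k \<omega>)"
  have [measurable]: "?H j \<in> borel_measurable M" for j
    by (rule phasor_measurable) simp_all
  have "?H (D0 \<omega> mod 4) \<omega> = (\<Sum>j<4. of_bool (D0 \<omega> mod 4 = j) * ?H j \<omega>)" for \<omega>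
  proof -
    have "(\<Sum>j<4. of_bool (D0 \<omega> mod 4 = j) * ?H j \<omega>) = (\<Sum>j<4. if D0 \<omega> mod 4 = j then ?H j \<omega> else 0)"
      by (intro sum.cong) auto
    also have "\<dots> = ?H (D0 \<omega> mod 4) \<omega>"
      by (simp add: sum.delta')
    finally show ?thesis ..
  qed
  then have "(\<integral>\<omega>. ?H (D0 \<omega> mod 4) \<omega> \<partial>M) = (\<integral>\<omega>. (\<Sum>j<4. of_bool (D0 \<omega> mod 4 = j) * ?H j \<omega>) \<partial>M)"
    by simp
  also have "\<dots> = (\<Sum>j<4. (\<integral>\<omega>. of_bool (D0 \<omega> mod 4 = j) * ?H j \<omega> \<partial>M))"
    by (intro Bochner_Integration.integral_sum integrable_const_bound[where B=1]) (auto simp: norm_phasor_le)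
  also have "\<dots> = (\<Sum>j<4. mean_phasor c a b n 0 j t / 4)"
    by (intro sum.cong refl integral_start_indicator_mult_phasor) simp
  finally show ?thesis
    by (simp add: sum_divide_distrib)
qed

lemma sum_integral_phasor_tendsto:
  assumes "0 \<le> t"
  shows "(\<lambda>N. \<Sum>n<N. \<integral>\<omega>. phasor c a b n (D0 \<omega> mod 4) t (\<lambda>k. \<tau> k \<omega>) (\<lambda>k. \<xi> k \<omega>) \<partial>M)
    \<longlonglongrightarrow> (\<Sum>j<4. closed_cf_real lam p c a b j t) / 4"
proof -
  have "(\<lambda>N. (\<Sum>j<4. \<Sum>n<N. mean_phasor c a b n 0 j t) / 4) \<longlonglongrightarrow> (\<Sum>j<4. closed_cf_real lam p c a b j t) / 4"
    using assms by (intro tendsto_divide tendsto_sum sum_mean_phasor_tendsto) auto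
  moreover have "(\<Sum>n<N. (\<Sum>j<4. mean_phasor c a b n 0 j t) / 4) = (\<Sum>j<4. \<Sum>n<N. mean_phasor c a b n 0 j t) / 4" for N
    unfolding sum_divide_distrib[symmetric] by (rule arg_cong[where f="\<lambda>x. x / 4"], rule sum.swap)
  ultimately show ?thesis
    unfolding integral_phasor_random_start by (simp only:)
qed

lemma AE_waits_pos: "AE \<omega> in M. \<forall>k. 0 < \<tau> k \<omega>"
proof (subst AE_all_countable, intro allI)
  fix k
  have "prob {\<omega> \<in> space M. 0 < \<tau> k \<omega>} = 1"
    using exponential_distributedD_gt[OF wait_exponential order_refl lam_pos] by simp
  from AE_prob_1[OF this] show "AE \<omega> in M. 0 < \<tau> k \<omega>"
    by eventually_elim auto
qed

text \<open>At \<open>a = b = 0\<close> the phasors are the indicators of the events \<open>N(t) = n\<close>, so the closed form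
  evaluated there says that these probabilities add up to \<open>1\<close>.\<close>
lemma AE_n_jumps:
  assumes "0 \<le> t"
  shows "AE \<omega> in M. \<exists>n. n_jumps n t (\<lambda>k. \<tau> k \<omega>)"
proof -
  define E where "E n = {\<omega> \<in> space M. n_jumps n t (\<lambda>k. \<tau> k \<omega>)}" for n
  have E_events: "E n \<in> events" for n
    unfolding E_def n_jumps_def by measurable
  have "(\<integral>\<omega>. phasor 0 0 0 n (D0 \<omega> mod 4) t (\<lambda>k. \<tau> k \<omega>) (\<lambda>k. \<xi> k \<omega>) \<partial>M) = of_real (prob (E n))" for n
  proof -
    have "(\<integral>\<omega>. phasor 0 0 0 n (D0 \<omega> mod 4) t (\<lambda>k. \<tau> k \<omega>) (\<lambda>k. \<xi> k \<omega>) \<partial>M) = (\<integral>\<omega>. of_real (indicator (E n) \<omega>) \<partial>M)"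
      by (intro Bochner_Integration.integral_cong) (auto simp: phasor_eq phase_def E_def indicator_def)
    then show ?thesis
      using E_events[of n] by (simp add: Int_absorb2 sets.sets_into_space)
  qed
  with sum_integral_phasor_tendsto[OF assms, of 0 0 0]
  have "(\<lambda>N. of_real (\<Sum>n<N. prob (E n)) :: complex) \<longlonglongrightarrow> of_real 1"
    using closed_cf_average_zero[OF lam_pos p_nonneg p_le_1] by simp
  then have "(\<lambda>n. prob (E n)) sums 1"
    unfolding sums_def tendsto_of_real_iff .
  moreover have "disjoint_family E"
    using n_jumps_unique by (auto simp: disjoint_family_on_def E_def)
  then have "(\<lambda>n. prob (E n)) sums prob (\<Union>n. E n)"
    using E_events by (intro measure_UNION) auto
  ultimately have "prob (\<Union>n. E n) = 1"
    using sums_unique2 by blast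
  from AE_prob_1[OF this] show ?thesis
    by eventually_elim (auto simp: E_def)
qed

lemma tendsto_sum_phasor_cis_position:
  assumes "0 \<le> t"
  shows "AE \<omega> in M. (\<lambda>N. \<Sum>n<N. phasor c a b n (D0 \<omega> mod 4) t (\<lambda>k. \<tau> k \<omega>) (\<lambda>k. \<xi> k \<omega>))
            \<longlonglongrightarrow> cis (a * posX c D0 \<tau> \<xi> t \<omega> + b * posY c D0 \<tau> \<xi> t \<omega>)"
  using AE_waits_pos AE_n_jumps[OF assms]
proof eventually_elim
  fix \<omega> assume pos: "\<forall>k. 0 < \<tau> k \<omega>" and "\<exists>n. n_jumps n t (\<lambda>k. \<tau> k \<omega>)"
  then obtain n0 where n0: "n_jumps n0 t (\<lambda>k. \<tau> k \<omega>)"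
    by blast
  have "cis (a * posX c D0 \<tau> \<xi> t \<omega> + b * posY c D0 \<tau> \<xi> t \<omega>) =
      phasor c a b n0 (D0 \<omega> mod 4) t (\<lambda>k. \<tau> k \<omega>) (\<lambda>k. \<xi> k \<omega>)"
    using n0 pos by (simp add: phasor_eq position_eq_phase)
  then have "\<forall>N\<ge>Suc n0. (\<Sum>n<N. phasor c a b n (D0 \<omega> mod 4) t (\<lambda>k. \<tau> k \<omega>) (\<lambda>k. \<xi> k \<omega>)) =
      cis (a * posX c D0 \<tau> \<xi> t \<omega> + b * posY c D0 \<tau> \<xi> t \<omega>)"
    by (simp add: sum_phasor[OF n0])
  then show "(\<lambda>N. \<Sum>n<N. phasor c a b n (D0 \<omega> mod 4) t (\<lambda>k. \<tau> k \<omega>) (\<lambda>k. \<xi> k \<omega>))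
      \<longlonglongrightarrow> cis (a * posX c D0 \<tau> \<xi> t \<omega> + b * posY c D0 \<tau> \<xi> t \<omega>)"
    by (intro tendsto_eventually) (auto simp: eventually_sequentially)
qed

lemma integral_cis_position:
  assumes "0 \<le> t"
  shows "(\<integral>\<omega>. cis (a * posX c D0 \<tau> \<xi> t \<omega> + b * posY c D0 \<tau> \<xi> t \<omega>) \<partial>M) =
    (\<Sum>j<4. closed_cf_real lam p c a b j t) / 4"
proof -
  let ?S = "\<lambda>N \<omega>. \<Sum>n<N. phasor c a b n (D0 \<omega> mod 4) t (\<lambda>k. \<tau> k \<omega>) (\<lambda>k. \<xi> k \<omega>)"
  have [measurable]: "(\<lambda>\<omega>. phasor c a b n (D0 \<omega> mod 4) t (\<lambda>k. \<tau> k \<omega>) (\<lambda>k. \<xi> k \<omega>)) \<in> borel_measurable M" for n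
    by (rule phasor_random_start_measurable)
  have S_measurable: "(\<lambda>\<omega>. ?S N \<omega>) \<in> borel_measurable M" for N
    by measurable
  have "(\<lambda>N. \<integral>\<omega>. ?S N \<omega> \<partial>M) \<longlonglongrightarrow> (\<integral>\<omega>. cis (a * posX c D0 \<tau> \<xi> t \<omega> + b * posY c D0 \<tau> \<xi> t \<omega>) \<partial>M)"
    by (rule integral_dominated_convergence[where w="\<lambda>_. 1",
          OF measurable_cis_position[OF D0_measurable wait_measurable turn_measurable] S_measurable _
          tendsto_sum_phasor_cis_position[OF assms]])
       (simp_all add: norm_sum_phasor_le)
  moreover have "(\<integral>\<omega>. ?S N \<omega> \<partial>M) = (\<Sum>n<N. \<integral>\<omega>. phasor c a b n (D0 \<omega> mod 4) t (\<lambda>k. \<tau> k \<omega>) (\<lambda>k. \<xi> k \<omega>) \<partial>M)" for N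
    by (intro Bochner_Integration.integral_sum integrable_const_bound[where B=1]) (auto simp: norm_phasor_le)
  ultimately have "(\<lambda>N. \<Sum>n<N. \<integral>\<omega>. phasor c a b n (D0 \<omega> mod 4) t (\<lambda>k. \<tau> k \<omega>) (\<lambda>k. \<xi> k \<omega>) \<partial>M)
      \<longlonglongrightarrow> (\<integral>\<omega>. cis (a * posX c D0 \<tau> \<xi> t \<omega> + b * posY c D0 \<tau> \<xi> t \<omega>) \<partial>M)"
    by simp
  from LIMSEQ_unique[OF this sum_integral_phasor_tendsto[OF assms]] show ?thesis .
qed

end

theorem mainTheorem1:
  fixes M :: "'a measure" and lam c p \<alpha> \<beta> t :: real
    and D0 :: "'a \<Rightarrow> nat" and \<tau> :: "nat \<Rightarrow> 'a \<Rightarrow> real" and \<xi> :: "nat \<Rightarrow> 'a \<Rightarrow> bool"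
  assumes "prob_space M"
    and "lam > 0" and "c > 0" and "0 < p" and "p < 1"
    and "D0 \<in> measurable M (count_space UNIV)"
    and "\<forall>k. \<tau> k \<in> borel_measurable M"
    and "\<forall>k. \<xi> k \<in> measurable M (count_space UNIV)"
    and "prob_space.indep_vars M (\<lambda>_. borel) (src_rv D0 \<tau> \<xi>) UNIV"
    and "\<forall>j<4. measure M {\<omega> \<in> space M. D0 \<omega> = j} = 1/4"
    and "\<forall>k. distributed M lborel (\<tau> k) (exponential_density lam)"
    and "\<forall>k. measure M {\<omega> \<in> space M. \<xi> k \<omega>} = p"
    and "t > 0"
  shows "(LINT \<omega>|M. cis (\<alpha> * posX c D0 \<tau> \<xi> t \<omega> + \<beta> * posY c D0 \<tau> \<xi> t \<omega>))
       = of_real (exp (- lam * t) / 4)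
         * phi (Afun lam p c \<alpha> \<beta>) (lam * p) t
         * phi (Bfun lam p c \<alpha> \<beta>) (lam * (1 - p)) t"
proof -
  interpret prob_space M
    by (rule assms(1))
  interpret orthogonal_walk M lam p D0 \<tau> \<xi>
    by unfold_locales (use assms in auto)
  from integral_cis_position[of t \<alpha> c \<beta>] \<open>t > 0\<close> show ?thesis
    unfolding closed_cf_average by simp
qed

end
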